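(* Let $\{G_n:\{0,1\}^n\to\{0,1\}^{N}\}$ (with $N=N(n)$) be a demi-bits generator, and for each $n$ let $\mathcal{H}_n=\{h:\{0,1\}^N\to\{0,1\}^m\}$ (with $m=m(n)$) be a family of pairwise independent hash functions, indexed by keys of length $\mathrm{poly}(n)$ and evaluable in polynomial time. Let $\mathcal{A}$ be a nondeterministic polynomial-time algorithm. If $N>10m$ and $m>n$, then (for all sufficiently large $n$) there exists $h\in\mathcal{H}_n$ such that $\mathcal{A}$ fails to solve the range avoidance problem on the input circuit $h\circ G_n:\{0,1\}^n\to\{0,1\}^m$.
   Context: Range avoidance: given a circuit $C:\{0,1\}^a\to\{0,1\}^b$ with $b>a$, output some $y\notin\mathrm{Range}(C)$. A nondeterministic algorithm $\mathcal{A}$ solves range avoidance on input $C$ if $\mathcal{A}(C)$ has at least one accepting computation path and every accepting path outputs a string not in $\mathrm{Range}(C)$; otherwise it fails on $C$. A family of hash functions $\mathcal{H}=\{h:\{0,1\}^N\to\{0,1\}^m\}$ is pairwise independent if for all distinct $y,y'$ and all $z,z'$, $\Pr_{h\sim\mathcal{H}}[h(y)=z\wedge h(y')=z']=2^{-2m}$. A family $\{G_n:\{0,1\}^n\to\{0,1\}^{N(n)}\}$ with $N(n)>n$, computable by polynomial-size circuits, is a demi-bits generator (secure against $\mathbf{NP}/\mathrm{poly}$) if for every family $\{D\}$ of polynomial-size nondeterministic circuits and all sufficiently large $n$, it is not the case that both $\Pr_{y\sim\{0,1\}^{N(n)}}[D(y)=1]\ge 1/3$ and $D(G_n(x))=0$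 for all $x\in\{0,1\}^n$. *)

theory Defs
  imports Complex_Main
begin

text \<open>Wires 0..cin-1 are the inputs; gate number j defines wire cin+j.\<close>

datatype gate = GConst bool | GNot nat | GAnd nat nat | GOr nat nat

record circuit =
  cin :: nat
  cgates :: "gate list"
  couts :: "nat list"

fun gate_args :: "gate \<Rightarrow> nat list" where
  "gate_args (GConst b) = []"
| "gate_args (GNot i) = [i]"
| "gate_args (GAnd i j) = [i, j]"
| "gate_args (GOr i j) = [i, j]"

fun gate_val :: "bool list \<Rightarrow> gate \<Rightarrow> bool" where
  "gate_val vs (GConst b) = b"
| "gate_val vs (GNot i) = (\<not> vs ! i)"
| "gate_val vs (GAnd i j) = (vs ! i \<and> vs ! j)"
| "gate_val vs (GOr i j) = (vs ! i \<or> vs ! j)"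

fun map_gate :: "(nat \<Rightarrow> nat) \<Rightarrow> gate \<Rightarrow> gate" where
  "map_gate f (GConst b) = GConst b"
| "map_gate f (GNot i) = GNot (f i)"
| "map_gate f (GAnd i j) = GAnd (f i) (f j)"
| "map_gate f (GOr i j) = GOr (f i) (f j)"

definition circ_wf :: "circuit \<Rightarrow> bool" where
  "circ_wf C \<longleftrightarrow>
     (\<forall>j < length (cgates C). \<forall>i \<in> set (gate_args (cgates C ! j)). i < cin C + j) \<and>
     (\<forall>w \<in> set (couts C). w < cin C + length (cgates C))"

definition wires :: "circuit \<Rightarrow> bool list \<Rightarrow> bool list" where
  "wires C x = fold (\<lambda>g vs. vs @ [gate_val vs g]) (cgates C) x"

definition ceval :: "circuit \<Rightarrow> bool list \<Rightarrow> bool list" where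
  "ceval C x = map (\<lambda>w. wires C x ! w) (couts C)"

definition csize :: "circuit \<Rightarrow> nat" where
  "csize C = cin C + length (cgates C) + length (couts C)"

definition computes :: "circuit \<Rightarrow> nat \<Rightarrow> nat \<Rightarrow> (bool list \<Rightarrow> bool list) \<Rightarrow> bool" where
  "computes C a b f \<longleftrightarrow> circ_wf C \<and> cin C = a \<and> length (couts C) = b \<and>
     (\<forall>x. length x = a \<longrightarrow> ceval C x = f x)"

definition crange :: "circuit \<Rightarrow> bool list set" where
  "crange C = {ceval C x | x. length x = cin C}"

definition poly_bounded :: "(nat \<Rightarrow> nat) \<Rightarrow> bool" where
  "poly_bounded f \<longleftrightarrow> (\<exists>c. \<forall>n. f n \<le> c * n ^ c + c)"

definition nd_accepts :: "circuit \<Rightarrow> nat \<Rightarrow> bool list \<Rightarrow> bool" where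
  "nd_accepts D w y \<longleftrightarrow> (\<exists>u. length u = w \<and> ceval D (y @ u) = [True])"

definition demi_bits :: "(nat \<Rightarrow> nat) \<Rightarrow> (nat \<Rightarrow> bool list \<Rightarrow> bool list) \<Rightarrow> bool" where
  "demi_bits N G \<longleftrightarrow>
     (\<forall>n. N n > n) \<and>
     (\<exists>Gc. poly_bounded (\<lambda>n. csize (Gc n)) \<and> (\<forall>n. computes (Gc n) n (N n) (G n))) \<and>
     (\<forall>(D :: nat \<Rightarrow> circuit) (W :: nat \<Rightarrow> nat).
        (\<forall>n. circ_wf (D n) \<and> cin (D n) = N n + W n \<and> length (couts (D n)) = 1) \<and>
        poly_bounded (\<lambda>n. csize (D n)) \<longrightarrow>
        (\<forall>\<^sub>F n in sequentially.
           \<not> (real (card {y. length y = N n \<and> nd_accepts (D n) (W n) y}) \<ge> (1/3) * 2 ^ N n \<and>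
              (\<forall>x. length x = n \<longrightarrow> \<not> nd_accepts (D n) (W n) (G n x)))))"

definition pairwise_indep ::
    "nat \<Rightarrow> nat \<Rightarrow> nat \<Rightarrow> (bool list \<Rightarrow> bool list \<Rightarrow> bool list) \<Rightarrow> bool" where
  "pairwise_indep k N m h \<longleftrightarrow>
     (\<forall>y y' z z'. length y = N \<and> length y' = N \<and> y \<noteq> y' \<and> length z = m \<and> length z' = m \<longrightarrow>
        real (card {key. length key = k \<and> h key y = z \<and> h key y' = z'}) / 2 ^ k = 1 / 2 ^ (2 * m))"

text \<open>The circuit h_key \<circ> G: the hash circuit Hc (inputs key @ y) with the key hardwired as
  constants and y fed by the outputs of Gc.\<close>
definition plug :: "circuit \<Rightarrow> circuit \<Rightarrow> bool list \<Rightarrow> circuit" where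
  "plug Gc Hc key =
    (let n = cin Gc; g = length (cgates Gc); k = length key; N = length (couts Gc);
         r = (\<lambda>w. if w < k then n + g + w
                   else if w < k + N then couts Gc ! (w - k)
                   else n + g + k + (w - k - N))
     in \<lparr> cin = n,
          cgates = cgates Gc @ map GConst key @ map (map_gate r) (cgates Hc),
          couts = map r (couts Hc) \<rparr>)"

definition enc_nat :: "nat \<Rightarrow> bool list" where
  "enc_nat k = replicate k True @ [False]"

fun enc_gate :: "gate \<Rightarrow> bool list" where
  "enc_gate (GConst b) = enc_nat 0 @ [b]"
| "enc_gate (GNot i) = enc_nat 1 @ enc_nat i"
| "enc_gate (GAnd i j) = enc_nat 2 @ enc_nat i @ enc_nat j"
| "enc_gate (GOr i j) = enc_nat 3 @ enc_nat i @ enc_nat j"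

definition enc_circuit :: "circuit \<Rightarrow> bool list" where
  "enc_circuit C = enc_nat (cin C) @ enc_nat (length (cgates C)) @ concat (map enc_gate (cgates C))
     @ enc_nat (length (couts C)) @ concat (map enc_nat (couts C))"

text \<open>Tape symbols: 0 = blank, 1 = bit 0, 2 = bit 1, others auxiliary.
  Transitions (q, read, q', write, move). The machine halts and accepts in state qacc;
  a configuration without applicable transition halts (rejects).\<close>

datatype move = MLeft | MRight | MStay

record ntm =
  q0 :: nat
  qacc :: nat
  delta :: "(nat \<times> nat \<times> nat \<times> nat \<times> move) set"

type_synonym config = "nat \<times> nat \<times> (nat \<Rightarrow> nat)"

definition sym :: "bool \<Rightarrow> nat" where
  "sym b = (if b then 2 else 1)"

fun mv :: "move \<Rightarrow> nat \<Rightarrow> nat" where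
  "mv MLeft h = h - 1"
| "mv MRight h = h + 1"
| "mv MStay h = h"

definition ntm_init :: "ntm \<Rightarrow> bool list \<Rightarrow> config" where
  "ntm_init M x = (q0 M, 0, \<lambda>i. if i < length x then sym (x ! i) else 0)"

definition ntm_step :: "ntm \<Rightarrow> config \<Rightarrow> config \<Rightarrow> bool" where
  "ntm_step M c c' \<longleftrightarrow>
     (case c of (q, h, t) \<Rightarrow> q \<noteq> qacc M \<and>
        (\<exists>q' s d. (q, t h, q', s, d) \<in> delta M \<and> c' = (q', mv d h, t(h := s))))"

definition ntm :: "ntm \<Rightarrow> bool" where
  "ntm M \<longleftrightarrow> finite (delta M)"

definition ntm_poly_time :: "ntm \<Rightarrow> bool" where
  "ntm_poly_time M \<longleftrightarrow> (\<exists>c. \<forall>x t cf. (ntm_step M ^^ t) (ntm_init M x) cf \<longrightarrow>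
      t \<le> c * length x ^ c + c)"

text \<open>The output of a tape: the maximal bit string written from cell 0 on.\<close>
definition tape_output :: "(nat \<Rightarrow> nat) \<Rightarrow> bool list \<Rightarrow> bool" where
  "tape_output tp y \<longleftrightarrow> (\<forall>i < length y. tp i = sym (y ! i)) \<and> tp (length y) \<notin> {1, 2}"

definition ntm_accepts_with :: "ntm \<Rightarrow> bool list \<Rightarrow> bool list \<Rightarrow> bool" where
  "ntm_accepts_with M x y \<longleftrightarrow>
     (\<exists>t h tp. (ntm_step M ^^ t) (ntm_init M x) (qacc M, h, tp) \<and> tape_output tp y)"

definition solves_avoid :: "ntm \<Rightarrow> circuit \<Rightarrow> bool" where
  "solves_avoid M C \<longleftrightarrow>
     (\<exists>y. ntm_accepts_with M (enc_circuit C) y) \<and>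
     (\<forall>y. ntm_accepts_with M (enc_circuit C) y \<longrightarrow>
        length y = length (couts C) \<and> y \<notin> crange C)"

end

theory Submission
  imports Defs
begin

text \<open>Suppose \<open>M\<close> solved range avoidance on \<open>h \<circ> G\<^sub>n\<close> for every key \<open>h\<close>.  Let \<open>D\<close> be the
  nondeterministic circuit that on input \<open>y\<close> guesses a key \<open>h\<close> and a computation of \<open>M\<close> on
  \<open>h \<circ> G\<^sub>n\<close>, and accepts iff the computation accepts with output \<open>h y\<close>.  Then \<open>D\<close> rejects
  every \<open>G\<^sub>n x\<close>, since \<open>h (G\<^sub>n x)\<close> lies in the range of \<open>h \<circ> G\<^sub>n\<close>.  If \<open>D\<close> rejected more
  than \<open>2^(2m)\<close> strings, a second moment argument with pairwise independence would give a key
  \<open>h\<close> mapping the rejected strings onto \<open>{0,1}^m\<close>, in particular onto an output of \<open>M\<close> on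
  \<open>h \<circ> G\<^sub>n\<close>; as \<open>N > 2m\<close>, \<open>D\<close> therefore accepts half of \<open>{0,1}^N\<close>.  \<open>D\<close> has polynomial
  size: \<open>M\<close> runs in polynomial time, each step is simulated by one layer of formulas guided
  by nondeterministic choice bits, and the encoding of \<open>h \<circ> G\<^sub>n\<close> depends on \<open>h\<close> only in
  known positions.  So \<open>D\<close> breaks the demi-bits generator.\<close>

section \<open>Straight-line evaluation of circuits\<close>

definition run_gates :: "gate list \<Rightarrow> bool list \<Rightarrow> bool list" where
  "run_gates gs x = fold (\<lambda>g vs. vs @ [gate_val vs g]) gs x"

lemma run_gates_Nil [simp]: "run_gates [] x = x"
  by (simp add: run_gates_def)

lemma run_gates_append: "run_gates (gs1 @ gs2) x = run_gates gs2 (run_gates gs1 x)"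
  by (simp add: run_gates_def)

lemma run_gates_Cons: "run_gates (g # gs) x = run_gates gs (x @ [gate_val x g])"
  by (simp add: run_gates_def)

lemma run_gates_snoc: "run_gates (gs @ [g]) x = run_gates gs x @ [gate_val (run_gates gs x) g]"
  by (simp add: run_gates_def)

lemma wires_eq_run_gates: "wires C x = run_gates (cgates C) x"
  by (simp add: run_gates_def wires_def)

lemma run_gates_extends: "\<exists>r. run_gates gs x = x @ r \<and> length r = length gs"
  by (induction gs rule: rev_induct) (auto simp: run_gates_snoc)

lemma length_run_gates [simp]: "length (run_gates gs x) = length x + length gs"
  using run_gates_extends[of gs x] by auto

lemma nth_run_gates_prefix: "i < length x \<Longrightarrow> run_gates gs x ! i = x ! i"
  using run_gates_extends[of gs x] by (auto simp: nth_append)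

lemma run_gates_consts: "run_gates (map GConst bs) x = x @ bs"
  by (induction bs arbitrary: x) (auto simp: run_gates_Cons)

lemma run_gates_copies:
  "\<forall>w \<in> set ws. w < length x \<Longrightarrow> run_gates (map (\<lambda>w. GAnd w w) ws) x = x @ map ((!) x) ws"
proof (induction ws arbitrary: x)
  case (Cons w ws)
  have "run_gates (map (\<lambda>w. GAnd w w) ws) (x @ [x ! w]) = (x @ [x ! w]) @ map ((!) (x @ [x ! w])) ws"
    using Cons by (intro Cons.IH) auto
  also have "map ((!) (x @ [x ! w])) ws = map ((!) x) ws"
    using Cons.prems by (auto simp: nth_append)
  finally show ?case by (simp add: run_gates_Cons)
qed simp

definition gates_wf :: "nat \<Rightarrow> gate list \<Rightarrow> bool" where
  "gates_wf b gs \<longleftrightarrow> (\<forall>j < length gs. \<forall>i \<in> set (gate_args (gs ! j)). i < b + j)"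

lemma gates_wf_Nil [simp]: "gates_wf b []"
  by (simp add: gates_wf_def)

lemma gates_wf_single [simp]: "gates_wf b [g] \<longleftrightarrow> (\<forall>i \<in> set (gate_args g). i < b)"
  by (simp add: gates_wf_def)

lemma gates_wf_append: "gates_wf b (gs1 @ gs2) \<longleftrightarrow> gates_wf b gs1 \<and> gates_wf (b + length gs1) gs2"
proof -
  have "(\<forall>j < length (gs1 @ gs2). P j) \<longleftrightarrow> (\<forall>j < length gs1. P j) \<and> (\<forall>j < length gs2. P (length gs1 + j))"
    for P by (auto, metis add_diff_inverse_nat add_less_cancel_left)
  then show ?thesis
    unfolding gates_wf_def by (simp add: nth_append add.assoc)
qed

lemma circ_wf_iff_gates_wf:
  "circ_wf C \<longleftrightarrow> gates_wf (cin C) (cgates C) \<and> (\<forall>w \<in> set (couts C). w < cin C + length (cgates C))"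
  by (simp add: circ_wf_def gates_wf_def)

definition relabel :: "nat list \<Rightarrow> nat \<Rightarrow> nat \<Rightarrow> nat" where
  "relabel ins b w = (if w < length ins then ins ! w else b + (w - length ins))"

lemma gate_val_map_gate:
  "\<forall>i \<in> set (gate_args g). vs ! r i = us ! i \<Longrightarrow> gate_val vs (map_gate r g) = gate_val us g"
  by (cases g) auto

lemma gate_args_map_gate: "set (gate_args (map_gate r g)) = r ` set (gate_args g)"
  by (cases g) auto

lemma run_gates_relabel:
  assumes "gates_wf (length ins) gs" and "\<forall>i \<in> set ins. i < length vs"
    and "w < length ins + length gs"
  shows "run_gates (map (map_gate (relabel ins (length vs))) gs) vs ! relabel ins (length vs) w
       = run_gates gs (map ((!) vs) ins) ! w"
  using assms(1,3)
proof (induction gs arbitrary: w rule: rev_induct)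
  case Nil
  then show ?case using assms(2) by (simp add: relabel_def nth_run_gates_prefix)
next
  case (snoc g gs)
  let ?r = "relabel ins (length vs)"
  let ?V = "run_gates (map (map_gate ?r) gs) vs"
  let ?U = "run_gates gs (map ((!) vs) ins)"
  have wf: "gates_wf (length ins) gs" and wf_g: "\<forall>i \<in> set (gate_args g). i < length ins + length gs"
    using snoc.prems(1) by (auto simp: gates_wf_append)
  have r_lt: "?r w' < length ?V" if "w' < length ins + length gs" for w'
    using that assms(2) by (auto simp: relabel_def intro: less_le_trans[OF _ le_add1])
  show ?case
  proof (cases "w < length ins + length gs")
    case True
    then show ?thesis using snoc.IH[OF wf True] r_lt[OF True] by (simp add: run_gates_snoc nth_append)
  next
    case False
    then have w: "w = length ins + length gs" using snoc.prems(2) by simp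
    have r_w: "?r w = length ?V" using w by (simp add: relabel_def)
    have "gate_val ?V (map_gate ?r g) = gate_val ?U g"
      using snoc.IH[OF wf] wf_g by (intro gate_val_map_gate) auto
    then show ?thesis using w r_w by (simp add: run_gates_snoc nth_append)
  qed
qed

lemma gates_wf_relabel:
  assumes "gates_wf (length ins) gs" and "\<forall>i \<in> set ins. i < b"
  shows "gates_wf b (map (map_gate (relabel ins b)) gs)"
  unfolding gates_wf_def
proof (intro allI impI ballI)
  fix j i assume j: "j < length (map (map_gate (relabel ins b)) gs)"
    and i: "i \<in> set (gate_args (map (map_gate (relabel ins b)) gs ! j))"
  then obtain i0 where i0: "i0 \<in> set (gate_args (gs ! j))" and i_eq: "i = relabel ins b i0"
    by (auto simp: gate_args_map_gate)
  have "i0 < length ins + j" using assms(1) j i0 unfolding gates_wf_def by auto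
  then show "i < b + j"
    using assms(2) i_eq by (auto simp: relabel_def intro: less_le_trans[OF _ le_add1])
qed

definition plug_relabel :: "circuit \<Rightarrow> nat \<Rightarrow> nat \<Rightarrow> nat" where
  "plug_relabel Gc k = relabel (map (\<lambda>i. cin Gc + length (cgates Gc) + i) [0..<k] @ couts Gc)
     (cin Gc + length (cgates Gc) + k)"

lemma plug_eq:
  "plug Gc Hc key = \<lparr> cin = cin Gc,
     cgates = cgates Gc @ map GConst key @ map (map_gate (plug_relabel Gc (length key))) (cgates Hc),
     couts = map (plug_relabel Gc (length key)) (couts Hc) \<rparr>"
proof -
  have "(\<lambda>w. if w < length key then cin Gc + length (cgates Gc) + w
            else if w < length key + length (couts Gc) then couts Gc ! (w - length key)
            else cin Gc + length (cgates Gc) + length key + (w - length key - length (couts Gc)))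
        = plug_relabel Gc (length key)"
    by (auto simp: plug_relabel_def relabel_def nth_append fun_eq_iff)
  then show ?thesis unfolding plug_def Let_def by simp
qed

lemma cin_plug [simp]: "cin (plug Gc Hc key) = cin Gc"
  by (simp add: plug_eq)

lemma length_couts_plug [simp]: "length (couts (plug Gc Hc key)) = length (couts Hc)"
  by (simp add: plug_eq)

context
  fixes Gc Hc :: circuit and key :: "bool list"
  assumes wf_G: "circ_wf Gc" and wf_H: "circ_wf Hc"
    and cin_H: "cin Hc = length key + length (couts Gc)"
begin

private abbreviation "ins \<equiv> map (\<lambda>i. cin Gc + length (cgates Gc) + i) [0..<length key] @ couts Gc"

private lemma ins_lt: "\<forall>i \<in> set ins. i < cin Gc + length (cgates Gc) + length key"
  using wf_G by (auto simp: circ_wf_def intro: less_le_trans[OF _ le_add1])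

private lemma wf_H_relabelled:
  "gates_wf (length ins) (cgates Hc)" "\<forall>w \<in> set (couts Hc). w < length ins + length (cgates Hc)"
  using wf_H cin_H by (simp_all add: circ_wf_iff_gates_wf)

lemma ceval_plug:
  assumes lx: "length x = cin Gc"
  shows "ceval (plug Gc Hc key) x = ceval Hc (key @ ceval Gc x)"
proof -
  define vs where "vs = run_gates (cgates Gc) x @ key"
  have lvs: "length vs = cin Gc + length (cgates Gc) + length key" by (simp add: vs_def lx)
  have ins_vals: "map ((!) vs) ins = key @ ceval Gc x"
    using wf_G by (auto intro!: nth_equalityI
        simp: vs_def nth_append lx ceval_def wires_eq_run_gates circ_wf_def)
  have "ceval (plug Gc Hc key) x
      = map (\<lambda>w. run_gates (map (map_gate (relabel ins (length vs))) (cgates Hc)) vs ! relabel ins (length vs) w) (couts Hc)"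
    by (simp add: plug_eq ceval_def wires_eq_run_gates run_gates_append run_gates_consts vs_def
        plug_relabel_def lx)
  also have "\<dots> = map (\<lambda>w. run_gates (cgates Hc) (key @ ceval Gc x) ! w) (couts Hc)"
  proof (rule map_cong[OF refl])
    fix w assume "w \<in> set (couts Hc)"
    then have "w < length ins + length (cgates Hc)" using wf_H_relabelled(2) by blast
    then show "run_gates (map (map_gate (relabel ins (length vs))) (cgates Hc)) vs ! relabel ins (length vs) w
        = run_gates (cgates Hc) (key @ ceval Gc x) ! w"
      using run_gates_relabel[OF wf_H_relabelled(1), of vs w] ins_lt unfolding lvs ins_vals by blast
  qed
  finally show ?thesis by (simp add: ceval_def wires_eq_run_gates)
qed

lemma circ_wf_plug: "circ_wf (plug Gc Hc key)"
proof -
  let ?b = "cin Gc + length (cgates Gc) + length key"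
  have "gates_wf (cin Gc) (cgates Gc)" using wf_G by (simp add: circ_wf_iff_gates_wf)
  moreover have "gates_wf (cin Gc + length (cgates Gc)) (map GConst key)"
    by (simp add: gates_wf_def)
  moreover have "gates_wf ?b (map (map_gate (relabel ins ?b)) (cgates Hc))"
    using gates_wf_relabel[OF wf_H_relabelled(1)] ins_lt by blast
  moreover have "\<forall>w \<in> set (couts Hc). relabel ins ?b w < ?b + length (cgates Hc)"
  proof
    fix w assume "w \<in> set (couts Hc)"
    moreover have "w < length ins \<Longrightarrow> ins ! w < ?b"
      using ins_lt nth_mem[of w ins] by blast
    ultimately show "relabel ins ?b w < ?b + length (cgates Hc)"
      using wf_H_relabelled(2) by (auto simp: relabel_def)
  qed
  ultimately show ?thesis
    by (simp add: circ_wf_iff_gates_wf plug_eq plug_relabel_def gates_wf_append add.assoc)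
qed

end

section \<open>Formulas compiled into gate lists\<close>

datatype fm = FV nat | FC bool | FN fm | FA fm fm | FO fm fm

fun feval :: "bool list \<Rightarrow> fm \<Rightarrow> bool" where
  "feval vs (FV i) = vs ! i"
| "feval vs (FC b) = b"
| "feval vs (FN f) = (\<not> feval vs f)"
| "feval vs (FA f g) = (feval vs f \<and> feval vs g)"
| "feval vs (FO f g) = (feval vs f \<or> feval vs g)"

lemma feval_if_FC_False [simp]: "feval vs (if b then f else FC False) = (b \<and> feval vs f)"
  by simp

fun fm_wf :: "nat \<Rightarrow> fm \<Rightarrow> bool" where
  "fm_wf b (FV i) = (i < b)"
| "fm_wf b (FC c) = True"
| "fm_wf b (FN f) = fm_wf b f"
| "fm_wf b (FA f g) = (fm_wf b f \<and> fm_wf b g)"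
| "fm_wf b (FO f g) = (fm_wf b f \<and> fm_wf b g)"

fun fsize :: "fm \<Rightarrow> nat" where
  "fsize (FV i) = 1"
| "fsize (FC c) = 1"
| "fsize (FN f) = Suc (fsize f)"
| "fsize (FA f g) = fsize f + fsize g + 1"
| "fsize (FO f g) = fsize f + fsize g + 1"

text \<open>\<open>compile_fm b f\<close> runs after \<open>b\<close> existing wires and leaves the value of \<open>f\<close> on its
  last wire, \<open>b + fsize f - 1\<close>.\<close>

fun compile_fm :: "nat \<Rightarrow> fm \<Rightarrow> gate list" where
  "compile_fm b (FV i) = [GAnd i i]"
| "compile_fm b (FC c) = [GConst c]"
| "compile_fm b (FN f) = compile_fm b f @ [GNot (b + fsize f - 1)]"
| "compile_fm b (FA f g) = compile_fm b f @ compile_fm (b + fsize f) g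
     @ [GAnd (b + fsize f - 1) (b + fsize f + fsize g - 1)]"
| "compile_fm b (FO f g) = compile_fm b f @ compile_fm (b + fsize f) g
     @ [GOr (b + fsize f - 1) (b + fsize f + fsize g - 1)]"

lemma fsize_pos [simp]: "0 < fsize f"
  by (induction f) auto

lemma length_compile_fm [simp]: "length (compile_fm b f) = fsize f"
  by (induction f arbitrary: b) auto

lemma fm_wf_mono: "fm_wf b f \<Longrightarrow> b \<le> b' \<Longrightarrow> fm_wf b' f"
  by (induction f) auto

lemma feval_cong: "fm_wf b f \<Longrightarrow> \<forall>i<b. vs ! i = us ! i \<Longrightarrow> feval vs f = feval us f"
  by (induction f) auto

lemma gates_wf_compile_fm: "fm_wf b f \<Longrightarrow> gates_wf b (compile_fm b f)"
proof (induction f arbitrary: b)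
  case (FA f g)
  then have "gates_wf (b + fsize f) (compile_fm (b + fsize f) g)"
    using fm_wf_mono[of b g "b + fsize f"] by simp
  moreover have "b + fsize f - 1 < b + fsize f + fsize g" "b + fsize f + fsize g - 1 < b + fsize f + fsize g"
    using fsize_pos[of f] fsize_pos[of g] by linarith+
  ultimately show ?case using FA by (simp add: gates_wf_append)
next
  case (FO f g)
  then have "gates_wf (b + fsize f) (compile_fm (b + fsize f) g)"
    using fm_wf_mono[of b g "b + fsize f"] by simp
  moreover have "b + fsize f - 1 < b + fsize f + fsize g" "b + fsize f + fsize g - 1 < b + fsize f + fsize g"
    using fsize_pos[of f] fsize_pos[of g] by linarith+
  ultimately show ?case using FO by (simp add: gates_wf_append)
qed (auto simp: gates_wf_append)

lemma run_compile_fm_binop: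
  assumes IH_f: "run_gates (compile_fm (length vs) f) vs ! (length vs + fsize f - 1) = feval vs f"
    and IH_g: "\<And>us. fm_wf (length us) g \<Longrightarrow>
      run_gates (compile_fm (length us) g) us ! (length us + fsize g - 1) = feval us g"
    and wf: "fm_wf (length vs) g"
  defines "us \<equiv> run_gates (compile_fm (length vs) f) vs"
  shows "run_gates (compile_fm (length vs + fsize f) g) us ! (length vs + fsize f - 1) = feval vs f"
    and "run_gates (compile_fm (length vs + fsize f) g) us ! (length vs + fsize f + fsize g - 1) = feval vs g"
proof -
  have l_us: "length us = length vs + fsize f" by (simp add: us_def)
  show "run_gates (compile_fm (length vs + fsize f) g) us ! (length vs + fsize f - 1) = feval vs f"
    using IH_f l_us by (simp add: nth_run_gates_prefix us_def)
  have "feval us g = feval vs g"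
    using feval_cong[OF wf, of us vs] by (simp add: us_def nth_run_gates_prefix)
  then show "run_gates (compile_fm (length vs + fsize f) g) us ! (length vs + fsize f + fsize g - 1) = feval vs g"
    using IH_g[of us] wf l_us fm_wf_mono[OF wf] by simp
qed

lemma run_compile_fm:
  "fm_wf (length vs) f \<Longrightarrow>
   run_gates (compile_fm (length vs) f) vs ! (length vs + fsize f - 1) = feval vs f"
proof (induction f arbitrary: vs)
  case (FN f)
  then show ?case by (simp add: run_gates_append run_gates_Cons nth_append)
next
  case (FA f g)
  then show ?case
    using run_compile_fm_binop[of vs f g] by (simp add: run_gates_append run_gates_Cons nth_append add.assoc)
next
  case (FO f g)
  then show ?case
    using run_compile_fm_binop[of vs f g] by (simp add: run_gates_append run_gates_Cons nth_append add.assoc)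
qed (simp_all add: run_gates_Cons nth_append)

text \<open>The copies put the values of the formulas, in order, on the last \<open>length fs\<close> wires of
  the layer.\<close>

fun compile_fms :: "nat \<Rightarrow> fm list \<Rightarrow> gate list" where
  "compile_fms b [] = []"
| "compile_fms b (f # fs) = compile_fm b f @ compile_fms (b + fsize f) fs"

fun fms_outputs :: "nat \<Rightarrow> fm list \<Rightarrow> nat list" where
  "fms_outputs b [] = []"
| "fms_outputs b (f # fs) = (b + fsize f - 1) # fms_outputs (b + fsize f) fs"

definition fm_layer :: "nat \<Rightarrow> fm list \<Rightarrow> gate list" where
  "fm_layer b fs = compile_fms b fs @ map (\<lambda>w. GAnd w w) (fms_outputs b fs)"

lemma length_compile_fms: "length (compile_fms b fs) = sum_list (map fsize fs)"
  by (induction fs arbitrary: b) auto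

lemma length_fms_outputs [simp]: "length (fms_outputs b fs) = length fs"
  by (induction fs arbitrary: b) auto

lemma length_fm_layer: "length (fm_layer b fs) = sum_list (map fsize fs) + length fs"
  by (simp add: fm_layer_def length_compile_fms)

lemma fms_outputs_lt: "\<forall>w \<in> set (fms_outputs b fs). w < b + sum_list (map fsize fs)"
proof (induction fs arbitrary: b)
  case (Cons f fs)
  have "b + fsize f - 1 < b + fsize f + sum_list (map fsize fs)"
    using fsize_pos[of f] by linarith
  then show ?case using Cons.IH[of "b + fsize f"] by (simp add: add.assoc)
qed simp

lemma run_compile_fms:
  assumes "\<forall>f \<in> set fs. fm_wf b0 f" and "b0 \<le> length vs" and "k < length fs"
  shows "run_gates (compile_fms (length vs) fs) vs ! (fms_outputs (length vs) fs ! k) = feval vs (fs ! k)"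
  using assms
proof (induction fs arbitrary: vs k)
  case (Cons f fs)
  define us where "us = run_gates (compile_fm (length vs) f) vs"
  have l_us: "length us = length vs + fsize f" by (simp add: us_def)
  show ?case
  proof (cases k)
    case 0
    have "fm_wf (length vs) f" using Cons.prems fm_wf_mono by auto
    then have "us ! (length vs + fsize f - 1) = feval vs f" unfolding us_def by (rule run_compile_fm)
    then show ?thesis
      using 0 l_us nth_run_gates_prefix[of "length vs + fsize f - 1" us]
      by (simp add: run_gates_append us_def[symmetric])
  next
    case (Suc k')
    have "feval us (fs ! k') = feval vs (fs ! k')"
      using Cons.prems Suc feval_cong[of b0 "fs ! k'" us vs] by (auto simp: us_def nth_run_gates_prefix)
    then show ?thesis
      using Cons.IH[of us k'] Cons.prems Suc l_us by (simp add: run_gates_append us_def[symmetric])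
  qed
qed simp

lemma run_fm_layer:
  assumes "\<forall>f \<in> set fs. fm_wf (length vs) f"
  shows "\<exists>R. run_gates (fm_layer (length vs) fs) vs = vs @ R @ map (feval vs) fs"
proof -
  define us where "us = run_gates (compile_fms (length vs) fs) vs"
  obtain R where R: "us = vs @ R" using run_gates_extends us_def by blast
  have outs_lt: "\<forall>w \<in> set (fms_outputs (length vs) fs). w < length us"
    using fms_outputs_lt[of "length vs" fs] by (simp add: us_def length_compile_fms)
  have "run_gates (fm_layer (length vs) fs) vs = us @ map ((!) us) (fms_outputs (length vs) fs)"
    by (simp add: fm_layer_def run_gates_append us_def[symmetric] run_gates_copies[OF outs_lt])
  also have "map ((!) us) (fms_outputs (length vs) fs) = map (feval vs) fs"
    using run_compile_fms[OF assms] by (auto intro!: nth_equalityI simp: us_def)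
  finally show ?thesis using R by simp
qed

lemma gates_wf_compile_fms: "\<forall>f \<in> set fs. fm_wf b f \<Longrightarrow> gates_wf b (compile_fms b fs)"
proof (induction fs arbitrary: b)
  case (Cons f fs)
  then have "gates_wf (b + fsize f) (compile_fms (b + fsize f) fs)"
    using fm_wf_mono[of b _ "b + fsize f"] by auto
  then show ?case using Cons gates_wf_compile_fm by (simp add: gates_wf_append)
qed simp

lemma gates_wf_fm_layer: "\<forall>f \<in> set fs. fm_wf b f \<Longrightarrow> gates_wf b (fm_layer b fs)"
proof -
  assume wf: "\<forall>f \<in> set fs. fm_wf b f"
  have "gates_wf (b + length (compile_fms b fs)) (map (\<lambda>w. GAnd w w) (fms_outputs b fs))"
    using fms_outputs_lt[of b fs] unfolding gates_wf_def
    by (auto simp: length_compile_fms intro: less_le_trans[OF _ le_add1])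
  then show ?thesis using gates_wf_compile_fms[OF wf] by (simp add: fm_layer_def gates_wf_append)
qed

lemma length_fm_layer_le:
  "\<forall>f \<in> set fs. fsize f \<le> S \<Longrightarrow> length (fm_layer b fs) \<le> length fs * (S + 1)"
  unfolding length_fm_layer by (induction fs) auto

definition fm_Or :: "fm list \<Rightarrow> fm" where
  "fm_Or fs = foldr FO fs (FC False)"

definition fm_And :: "fm list \<Rightarrow> fm" where
  "fm_And fs = foldr FA fs (FC True)"

lemma feval_fm_Or: "feval vs (fm_Or fs) = (\<exists>f\<in>set fs. feval vs f)"
  by (induction fs) (auto simp: fm_Or_def)

lemma feval_fm_And: "feval vs (fm_And fs) = (\<forall>f\<in>set fs. feval vs f)"
  by (induction fs) (auto simp: fm_And_def)

lemma feval_fm_Or_upt [simp]: "feval vs (fm_Or (map g [0..<n])) = (\<exists>k<n. feval vs (g k))"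
  by (auto simp: feval_fm_Or)

lemma feval_fm_And_upt [simp]: "feval vs (fm_And (map g [0..<n])) = (\<forall>k<n. feval vs (g k))"
  by (auto simp: feval_fm_And)

lemma fm_wf_fm_Or [simp]: "fm_wf b (fm_Or fs) = (\<forall>f\<in>set fs. fm_wf b f)"
  by (induction fs) (auto simp: fm_Or_def)

lemma fm_wf_fm_And [simp]: "fm_wf b (fm_And fs) = (\<forall>f\<in>set fs. fm_wf b f)"
  by (induction fs) (auto simp: fm_And_def)

lemma fsize_fm_Or: "fsize (fm_Or fs) = sum_list (map fsize fs) + length fs + 1"
  by (induction fs) (auto simp: fm_Or_def)

lemma fsize_fm_And: "fsize (fm_And fs) = sum_list (map fsize fs) + length fs + 1"
  by (induction fs) (auto simp: fm_And_def)

lemma fsize_FA_le_pow: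
  "fsize f \<le> K ^ e \<Longrightarrow> fsize g \<le> K ^ e \<Longrightarrow> 3 \<le> K \<Longrightarrow> fsize (FA f g) \<le> K ^ Suc e"
proof -
  assume f: "fsize f \<le> K ^ e" and g: "fsize g \<le> K ^ e" and K: "3 \<le> K"
  have "1 \<le> K ^ e" using K by simp
  then have "fsize (FA f g) \<le> 3 * K ^ e" using f g by simp
  also have "\<dots> \<le> K * K ^ e" using K by (intro mult_right_mono) auto
  finally show ?thesis by simp
qed

lemma fsize_FO_le_pow:
  "fsize f \<le> K ^ e \<Longrightarrow> fsize g \<le> K ^ e \<Longrightarrow> 3 \<le> K \<Longrightarrow> fsize (FO f g) \<le> K ^ Suc e"
  using fsize_FA_le_pow[of f K e g] by simp

lemma fsize_FN_le_pow: "fsize f \<le> K ^ e \<Longrightarrow> 3 \<le> K \<Longrightarrow> fsize (FN f) \<le> K ^ Suc e"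
  using fsize_FA_le_pow[of f K e f] by simp

lemma fsize_FV_le_pow: "1 \<le> K \<Longrightarrow> fsize (FV i) \<le> K ^ e"
  by simp

lemma fsize_FC_le_pow: "1 \<le> K \<Longrightarrow> fsize (FC c) \<le> K ^ e"
  by simp

lemma fsize_fm_Or_le_pow:
  assumes "\<And>i. i < n \<Longrightarrow> fsize (g i) \<le> K ^ e" and "2 * n < K"
  shows "fsize (fm_Or (map g [0..<n])) \<le> K ^ Suc e"
proof -
  have K: "1 \<le> K ^ e" using assms(2) by simp
  have "sum_list (map fsize (map g [0..<n])) \<le> n * K ^ e"
    using sum_list_mono[of "[0..<n]" "\<lambda>i. fsize (g i)" "\<lambda>_. K ^ e"] assms(1)
    by (simp add: sum_list_triv o_def)
  moreover have "n \<le> n * K ^ e" using K by simp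
  moreover have "fsize (fm_Or (map g [0..<n])) = sum_list (map fsize (map g [0..<n])) + n + 1"
    by (simp add: fsize_fm_Or)
  ultimately have "fsize (fm_Or (map g [0..<n])) \<le> n * K ^ e + n * K ^ e + K ^ e"
    using K by linarith
  also have "\<dots> = (2 * n + 1) * K ^ e" by (simp add: algebra_simps)
  also have "\<dots> \<le> K * K ^ e" using assms(2) by (intro mult_right_mono) auto
  finally show ?thesis by simp
qed

lemma fsize_fm_And_le_pow:
  "(\<And>i. i < n \<Longrightarrow> fsize (g i) \<le> K ^ e) \<Longrightarrow> 2 * n < K \<Longrightarrow> fsize (fm_And (map g [0..<n])) \<le> K ^ Suc e"
  using fsize_fm_Or_le_pow[of n g K e] by (simp add: fsize_fm_And fsize_fm_Or)

section \<open>Simulating a nondeterministic Turing machine\<close>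

type_synonym transition = "nat \<times> nat \<times> nat \<times> nat \<times> move"

definition tr_src :: "transition \<Rightarrow> nat" where "tr_src t = fst t"
definition tr_read :: "transition \<Rightarrow> nat" where "tr_read t = fst (snd t)"
definition tr_dst :: "transition \<Rightarrow> nat" where "tr_dst t = fst (snd (snd t))"
definition tr_write :: "transition \<Rightarrow> nat" where "tr_write t = fst (snd (snd (snd t)))"
definition tr_move :: "transition \<Rightarrow> move" where "tr_move t = snd (snd (snd (snd t)))"

definition cfg_state :: "config \<Rightarrow> nat" where "cfg_state c = fst c"
definition cfg_head :: "config \<Rightarrow> nat" where "cfg_head c = fst (snd c)"
definition cfg_tape :: "config \<Rightarrow> nat \<Rightarrow> nat" where "cfg_tape c = snd (snd c)"

lemma div_mod_mult_add: "j < (n::nat) \<Longrightarrow> (i * n + j) div n = i \<and> (i * n + j) mod n = j"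
  by simp

definition first_choice :: "bool list \<Rightarrow> nat \<Rightarrow> bool" where
  "first_choice cs j \<longleftrightarrow> j < length cs \<and> cs ! j \<and> (\<forall>j'<j. \<not> cs ! j')"

lemma ntm_step_iff: "ntm_step M c c' \<longleftrightarrow> cfg_state c \<noteq> qacc M \<and>
   (\<exists>q' s d. (cfg_state c, cfg_tape c (cfg_head c), q', s, d) \<in> delta M \<and> c' = (q', mv d (cfg_head c), (cfg_tape c)(cfg_head c := s)))"
  by (cases c) (simp add: ntm_step_def cfg_state_def cfg_tape_def cfg_head_def)

text \<open>\<open>ds\<close> enumerates the transitions of \<open>M\<close>; \<open>qs\<close> and \<open>ss\<close> list all states and tape
  symbols that can occur, and only the cells \<open>0..<P\<close> are simulated.  A step is guided by a
  choice vector \<open>cs\<close> of length \<open>length ds\<close>: its first set bit names the transition to take.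
  If there is no such bit, or the named transition does not apply, the configuration is
  left unchanged, so every guided run is a genuine run of \<open>M\<close> followed by idling.\<close>

locale ntm_sim =
  fixes M :: ntm and ds :: "transition list"
    and qs ss :: "nat list" and P :: nat
  assumes ds_delta: "set ds = delta M"
    and q0_qs: "q0 M \<in> set qs"
    and ds_qs: "\<forall>t\<in>set ds. tr_dst t \<in> set qs"
    and ss0: "0 \<in> set ss" and ss1: "1 \<in> set ss" and ss2: "2 \<in> set ss"
    and ds_ss: "\<forall>t\<in>set ds. tr_write t \<in> set ss"
begin

abbreviation "nd \<equiv> length ds"
abbreviation "nq \<equiv> length qs"
abbreviation "ns \<equiv> length ss"

definition applicable :: "config \<Rightarrow> transition \<Rightarrow> bool" where
  "applicable c t \<longleftrightarrow> cfg_state c = tr_src t \<and> cfg_tape c (cfg_head c) = tr_read t \<and> cfg_state c \<noteq> qacc M"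

definition apply_tr :: "transition \<Rightarrow> config \<Rightarrow> config" where
  "apply_tr t c = (tr_dst t, mv (tr_move t) (cfg_head c), (cfg_tape c)(cfg_head c := tr_write t))"

definition chosen :: "bool list \<Rightarrow> config \<Rightarrow> nat \<Rightarrow> bool" where
  "chosen cs c j \<longleftrightarrow> j < nd \<and> first_choice cs j \<and> applicable c (ds ! j)"

definition guided_step :: "bool list \<Rightarrow> config \<Rightarrow> config" where
  "guided_step cs c = (if \<exists>j. chosen cs c j then apply_tr (ds ! (THE j. chosen cs c j)) c else c)"

lemma chosen_unique: "chosen cs c j \<Longrightarrow> chosen cs c j' \<Longrightarrow> j = j'"
  unfolding chosen_def first_choice_def by (metis linorder_neqE_nat)

lemma guided_step_chosen: "chosen cs c j \<Longrightarrow> guided_step cs c = apply_tr (ds ! j) c"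
  unfolding guided_step_def using chosen_unique by (metis the_equality)

lemma guided_step_no_choice: "\<not> (\<exists>j. chosen cs c j) \<Longrightarrow> guided_step cs c = c"
  unfolding guided_step_def by (rule if_not_P)

lemma guided_step_sound: "guided_step cs c = c \<or> ntm_step M c (guided_step cs c)"
proof (cases "\<exists>j. chosen cs c j")
  case True
  then obtain j where j: "chosen cs c j" by blast
  obtain q a q' s d where tr: "ds ! j = (q, a, q', s, d)" by (cases "ds ! j")
  have "(q, a, q', s, d) \<in> delta M" using j tr ds_delta by (metis chosen_def nth_mem)
  moreover have "q = cfg_state c" "a = cfg_tape c (cfg_head c)" "cfg_state c \<noteq> qacc M"
    using j tr by (auto simp: chosen_def applicable_def tr_src_def tr_read_def)
  moreover have "guided_step cs c = (q', mv d (cfg_head c), (cfg_tape c)(cfg_head c := s))"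
    using guided_step_chosen[OF j] tr by (simp add: apply_tr_def tr_dst_def tr_move_def tr_write_def)
  ultimately show ?thesis unfolding ntm_step_iff by blast
next
  case False
  then show ?thesis by (simp add: guided_step_no_choice)
qed

lemma guided_step_complete:
  assumes "ntm_step M c c'"
  shows "\<exists>cs. length cs = nd \<and> guided_step cs c = c'"
proof -
  obtain q' s d where st: "cfg_state c \<noteq> qacc M" and mem: "(cfg_state c, cfg_tape c (cfg_head c), q', s, d) \<in> delta M"
    and c': "c' = (q', mv d (cfg_head c), (cfg_tape c)(cfg_head c := s))"
    using assms unfolding ntm_step_iff by blast
  obtain j where j: "j < nd" "ds ! j = (cfg_state c, cfg_tape c (cfg_head c), q', s, d)"
    using mem ds_delta by (metis in_set_conv_nth)
  define cs where "cs = map (\<lambda>i. i = j) [0..<nd]"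
  have "chosen cs c j" using j st
    by (auto simp: chosen_def first_choice_def cs_def applicable_def tr_src_def tr_read_def)
  then have "guided_step cs c = apply_tr (ds ! j) c" by (rule guided_step_chosen)
  also have "\<dots> = c'" using j c' by (simp add: apply_tr_def tr_dst_def tr_move_def tr_write_def)
  finally have "guided_step cs c = c'" .
  moreover have "length cs = nd" by (simp add: cs_def)
  ultimately show ?thesis by blast
qed

lemma guided_step_accepting: "cfg_state c = qacc M \<Longrightarrow> guided_step cs c = c"
  by (rule guided_step_no_choice) (auto simp: chosen_def applicable_def)

fun guided_run :: "(nat \<Rightarrow> bool list) \<Rightarrow> nat \<Rightarrow> config \<Rightarrow> config" where
  "guided_run ch 0 c = c"
| "guided_run ch (Suc t) c = guided_step (ch t) (guided_run ch t c)"

lemma guided_run_sound: "(ntm_step M)\<^sup>*\<^sup>* c (guided_run ch t c)"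
proof (induction t)
  case 0 then show ?case by simp
next
  case (Suc t)
  then show ?case using guided_step_sound[of "ch t" "guided_run ch t c"]
    by (auto intro: rtranclp.rtrancl_into_rtrancl)
qed

lemma guided_run_cong: "\<forall>i<t. ch i = ch' i \<Longrightarrow> guided_run ch t c = guided_run ch' t c"
  by (induction t) auto

lemma guided_run_complete:
  "(ntm_step M ^^ t) c c' \<Longrightarrow> \<exists>ch. (\<forall>i. length (ch i) = nd) \<and> guided_run ch t c = c'"
proof (induction t arbitrary: c')
  case 0 then show ?case by (auto intro: exI[of _ "\<lambda>_. replicate nd False"])
next
  case (Suc t)
  from Suc.prems obtain y where y: "(ntm_step M ^^ t) c y" "ntm_step M y c'"
    by (rule relpowp_Suc_E)
  obtain ch where ch: "\<forall>i. length (ch i) = nd" "guided_run ch t c = y" using Suc.IH y(1) by blast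
  obtain cs where cs: "length cs = nd" "guided_step cs y = c'" using guided_step_complete[OF y(2)] by blast
  define ch' where "ch' = ch(t := cs)"
  have "guided_run ch' t c = guided_run ch t c" by (rule guided_run_cong) (simp add: ch'_def)
  then have "guided_run ch' (Suc t) c = c'" using ch cs by (simp add: ch'_def)
  moreover have "\<forall>i. length (ch' i) = nd" using ch cs by (simp add: ch'_def)
  ultimately show ?case by blast
qed

lemma guided_run_accepting_stays: "cfg_state (guided_run ch t c) = qacc M \<Longrightarrow> guided_run ch (t + k) c = guided_run ch t c"
  by (induction k) (auto simp: guided_step_accepting)

definition cfg_bounded :: "nat \<Rightarrow> config \<Rightarrow> bool" where
  "cfg_bounded t c \<longleftrightarrow> cfg_state c \<in> set qs \<and> cfg_head c \<le> t \<and> (\<forall>i. cfg_tape c i \<in> set ss)"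

lemma cfg_bounded_guided_step: "cfg_bounded t c \<Longrightarrow> cfg_bounded (Suc t) (guided_step cs c)"
proof (cases "\<exists>j. chosen cs c j")
  case True
  assume iv: "cfg_bounded t c"
  from True obtain j where j: "chosen cs c j" by blast
  have jm: "ds ! j \<in> set ds" using j by (simp add: chosen_def)
  have "cfg_head (apply_tr (ds ! j) c) \<le> Suc t"
    using iv by (cases "tr_move (ds ! j)") (auto simp: apply_tr_def cfg_head_def cfg_bounded_def)
  then show ?thesis using guided_step_chosen[OF j] iv ds_qs ds_ss jm
    by (auto simp: cfg_bounded_def apply_tr_def cfg_state_def cfg_tape_def cfg_head_def)
next
  case False
  assume "cfg_bounded t c"
  then show ?thesis using False by (simp add: guided_step_no_choice cfg_bounded_def)
qed

lemma cfg_bounded_guided_run: "cfg_bounded 0 c \<Longrightarrow> cfg_bounded t (guided_run ch t c)"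
  by (induction t) (auto simp: cfg_bounded_guided_step)

lemma cfg_bounded_ntm_init: "cfg_bounded 0 (ntm_init M e)"
  using q0_qs ss0 ss1 ss2 by (auto simp: cfg_bounded_def ntm_init_def cfg_state_def cfg_head_def cfg_tape_def sym_def)

text \<open>A configuration is stored one-hot in a block of \<open>block_len\<close> consecutive wires
  starting at \<open>p\<close>: one wire per state in \<open>qs\<close>, one per head position below \<open>P\<close>, and
  one per pair of a cell below \<open>P\<close> and a symbol in \<open>ss\<close>.\<close>

definition head_pos :: "nat \<Rightarrow> nat \<Rightarrow> nat" where "head_pos p i = p + nq + i"
definition cell_pos :: "nat \<Rightarrow> nat \<Rightarrow> nat \<Rightarrow> nat" where "cell_pos p i s = p + nq + P + i * ns + s"
definition block_len :: nat where "block_len = nq + P + P * ns"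

lemma cell_index_lt: "i < P \<Longrightarrow> s < ns \<Longrightarrow> i * ns + s < P * ns"
proof -
  assume "i < P" "s < ns"
  then have "i * ns + s < i * ns + ns" by simp
  also have "\<dots> = Suc i * ns" by simp
  also have "\<dots> \<le> P * ns" using \<open>i < P\<close> by (intro mult_right_mono) auto
  finally show ?thesis .
qed

lemma cell_pos_lt: "i < P \<Longrightarrow> s < ns \<Longrightarrow> cell_pos p i s < p + block_len"
  using cell_index_lt[of i s] by (simp add: cell_pos_def block_len_def)

definition encodes_cfg :: "bool list \<Rightarrow> nat \<Rightarrow> config \<Rightarrow> bool" where
  "encodes_cfg vs p c \<longleftrightarrow> (\<forall>k<nq. vs ! (p + k) = (cfg_state c = qs ! k)) \<and>
     (\<forall>i<P. vs ! (head_pos p i) = (cfg_head c = i)) \<and>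
     (\<forall>i<P. \<forall>s<ns. vs ! (cell_pos p i s) = (cfg_tape c i = ss ! s))"

definition block_fms :: "(nat \<Rightarrow> fm) \<Rightarrow> (nat \<Rightarrow> fm) \<Rightarrow> (nat \<Rightarrow> nat \<Rightarrow> fm) \<Rightarrow> fm list" where
  "block_fms F H C = map F [0..<nq] @ map H [0..<P] @ map (\<lambda>r. C (r div ns) (r mod ns)) [0..<P * ns]"

lemma length_block_fms[simp]: "length (block_fms F H C) = block_len"
  by (simp add: block_fms_def block_len_def)

lemma set_block_fms: "set (block_fms F H C) = F ` {0..<nq} \<union> H ` {0..<P} \<union> (\<lambda>r. C (r div ns) (r mod ns)) ` {0..<P*ns}"
  by (auto simp: block_fms_def)

lemma encodes_cfg_block_fms:
  assumes F: "\<forall>k<nq. feval vs (F k) = (cfg_state c = qs ! k)"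
    and H: "\<forall>i<P. feval vs (H i) = (cfg_head c = i)"
    and C: "\<forall>i<P. \<forall>s<ns. feval vs (C i s) = (cfg_tape c i = ss ! s)"
  shows "encodes_cfg (X @ map (feval vs) (block_fms F H C) @ Y) (length X) c"
proof -
  let ?V = "X @ map (feval vs) (block_fms F H C) @ Y"
  have nthV: "?V ! (length X + r) = feval vs (block_fms F H C ! r)" if "r < block_len" for r
    using that by (simp add: nth_append)
  have a: "\<forall>k<nq. ?V ! (length X + k) = (cfg_state c = qs ! k)"
    using F nthV by (auto simp: block_len_def block_fms_def nth_append)
  have b: "\<forall>i<P. ?V ! (head_pos (length X) i) = (cfg_head c = i)"
  proof (intro allI impI)
    fix i assume i: "i < P"
    have "?V ! (head_pos (length X) i) = feval vs (block_fms F H C ! (nq + i))"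
      using nthV[of "nq + i"] i by (simp add: head_pos_def block_len_def add.assoc)
    also have "\<dots> = feval vs (H i)" using i by (simp add: block_fms_def nth_append)
    finally show "?V ! (head_pos (length X) i) = (cfg_head c = i)" using H i by simp
  qed
  have cc: "\<forall>i<P. \<forall>s<ns. ?V ! (cell_pos (length X) i s) = (cfg_tape c i = ss ! s)"
  proof (intro allI impI)
    fix i s assume i: "i < P" and s: "s < ns"
    have lt: "i * ns + s < P * ns" using cell_index_lt[OF i s] .
    have "?V ! (cell_pos (length X) i s) = feval vs (block_fms F H C ! (nq + P + (i * ns + s)))"
      using nthV[of "nq + P + (i * ns + s)"] lt by (simp add: cell_pos_def block_len_def add.assoc)
    also have "\<dots> = feval vs (C ((i * ns + s) div ns) ((i * ns + s) mod ns))"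
      using lt by (simp add: block_fms_def nth_append)
    also have "\<dots> = feval vs (C i s)"
      using div_mod_mult_add[OF s] by simp
    finally show "?V ! (cell_pos (length X) i s) = (cfg_tape c i = ss ! s)" using C i s by simp
  qed
  show ?thesis using a b cc by (simp add: encodes_cfg_def)
qed

definition state_fm :: "nat \<Rightarrow> nat \<Rightarrow> fm" where
  "state_fm p q = fm_Or (map (\<lambda>k. if qs ! k = q then FV (p + k) else FC False) [0..<nq])"

definition cell_fm :: "nat \<Rightarrow> nat \<Rightarrow> nat \<Rightarrow> fm" where
  "cell_fm p i a = fm_Or (map (\<lambda>s. if ss ! s = a then FV (cell_pos p i s) else FC False) [0..<ns])"

definition head_fm :: "nat \<Rightarrow> nat \<Rightarrow> fm" where "head_fm p i = FV (head_pos p i)"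
definition read_fm :: "nat \<Rightarrow> nat \<Rightarrow> fm" where
  "read_fm p a = fm_Or (map (\<lambda>i. FA (head_fm p i) (cell_fm p i a)) [0..<P])"

definition first_fm :: "nat \<Rightarrow> nat \<Rightarrow> fm" where
  "first_fm cb j = FA (FV (cb + j)) (fm_And (map (\<lambda>j'. FN (FV (cb + j'))) [0..<j]))"

definition applicable_fm :: "nat \<Rightarrow> transition \<Rightarrow> fm" where
  "applicable_fm p t = (if tr_src t = qacc M then FC False else FA (state_fm p (tr_src t)) (read_fm p (tr_read t)))"

definition chosen_fm :: "nat \<Rightarrow> nat \<Rightarrow> nat \<Rightarrow> fm" where
  "chosen_fm p cb j = FA (first_fm cb j) (applicable_fm p (ds ! j))"

definition no_choice_fm :: "nat \<Rightarrow> nat \<Rightarrow> fm" where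
  "no_choice_fm p cb = FN (fm_Or (map (chosen_fm p cb) [0..<nd]))"

definition next_state_fm :: "nat \<Rightarrow> nat \<Rightarrow> nat \<Rightarrow> fm" where
  "next_state_fm p cb k = FO (FA (no_choice_fm p cb) (FV (p + k)))
      (fm_Or (map (\<lambda>j. if tr_dst (ds ! j) = qs ! k then chosen_fm p cb j else FC False) [0..<nd]))"

definition next_head_fm :: "nat \<Rightarrow> nat \<Rightarrow> nat \<Rightarrow> fm" where
  "next_head_fm p cb i = FO (FA (no_choice_fm p cb) (head_fm p i))
      (fm_Or (map (\<lambda>j. FA (chosen_fm p cb j) (fm_Or (map (\<lambda>i'. if mv (tr_move (ds ! j)) i' = i then head_fm p i' else FC False) [0..<P]))) [0..<nd]))"

definition next_cell_fm :: "nat \<Rightarrow> nat \<Rightarrow> nat \<Rightarrow> nat \<Rightarrow> fm" where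
  "next_cell_fm p cb i s = FO (FA (head_fm p i) (fm_Or (map (\<lambda>j. if tr_write (ds ! j) = ss ! s then chosen_fm p cb j else FC False) [0..<nd])))
      (FA (FO (FN (head_fm p i)) (no_choice_fm p cb)) (FV (cell_pos p i s)))"

definition step_fms :: "nat \<Rightarrow> nat \<Rightarrow> fm list" where
  "step_fms p cb = block_fms (next_state_fm p cb) (next_head_fm p cb) (next_cell_fm p cb)"

context
  fixes vs p c t
  assumes bl: "encodes_cfg vs p c" and iv: "cfg_bounded t c" and hP: "cfg_head c < P"
begin

lemma feval_state_fm: "feval vs (state_fm p q) = (cfg_state c = q)"
proof -
  have "feval vs (state_fm p q) = (\<exists>k<nq. qs ! k = q \<and> cfg_state c = qs ! k)"
    using bl by (auto simp: state_fm_def encodes_cfg_def)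
  also have "\<dots> = (cfg_state c = q)" using iv by (auto simp: cfg_bounded_def in_set_conv_nth)
  finally show ?thesis .
qed

lemma feval_cell_fm: "i < P \<Longrightarrow> feval vs (cell_fm p i a) = (cfg_tape c i = a)"
proof -
  assume i: "i < P"
  have "feval vs (cell_fm p i a) = (\<exists>s<ns. ss ! s = a \<and> cfg_tape c i = ss ! s)"
    using bl i by (auto simp: cell_fm_def encodes_cfg_def)
  also have "\<dots> = (cfg_tape c i = a)"
  proof -
    have "cfg_tape c i \<in> set ss" using iv by (simp add: cfg_bounded_def)
    then show ?thesis by (auto simp: in_set_conv_nth)
  qed
  finally show ?thesis .
qed

lemma feval_head_fm: "i < P \<Longrightarrow> feval vs (head_fm p i) = (cfg_head c = i)"
  using bl unfolding head_fm_def encodes_cfg_def by auto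

lemma feval_read_fm: "feval vs (read_fm p a) = (cfg_tape c (cfg_head c) = a)"
proof -
  have "feval vs (read_fm p a) = (\<exists>i<P. cfg_head c = i \<and> cfg_tape c i = a)"
    by (auto simp: read_fm_def feval_head_fm feval_cell_fm)
  also have "\<dots> = (cfg_tape c (cfg_head c) = a)" using hP by auto
  finally show ?thesis .
qed

lemma feval_applicable_fm: "feval vs (applicable_fm p tr) = applicable c tr"
  by (auto simp: applicable_fm_def applicable_def feval_state_fm feval_read_fm)

context
  fixes cb cs
  assumes cs: "length cs = nd" "\<forall>j<nd. vs ! (cb + j) = cs ! j"
begin

lemma feval_first_fm: "j < nd \<Longrightarrow> feval vs (first_fm cb j) = first_choice cs j"
  using cs by (auto simp: first_fm_def first_choice_def)

lemma feval_chosen_fm: "j < nd \<Longrightarrow> feval vs (chosen_fm p cb j) = chosen cs c j"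
  by (simp add: chosen_fm_def feval_first_fm feval_applicable_fm chosen_def)

lemma chosen_lt: "chosen cs c j \<Longrightarrow> j < nd" by (simp add: chosen_def)

lemma feval_no_choice_fm: "feval vs (no_choice_fm p cb) = (\<not> (\<exists>j. chosen cs c j))"
proof -
  have "feval vs (no_choice_fm p cb) = (\<not> (\<exists>j<nd. chosen cs c j))"
    by (auto simp: no_choice_fm_def feval_chosen_fm)
  then show ?thesis using chosen_lt by blast
qed

lemma feval_next_state_fm: "k < nq \<Longrightarrow> feval vs (next_state_fm p cb k) = (cfg_state (guided_step cs c) = qs ! k)"
proof (cases "\<exists>j. chosen cs c j")
  case True
  then obtain j where j: "chosen cs c j" by blast
  have "\<forall>j'<nd. feval vs (chosen_fm p cb j') = (j' = j)" using j chosen_unique feval_chosen_fm by blast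
  then show "k < nq \<Longrightarrow> ?thesis" using j guided_step_chosen[OF j] chosen_lt[OF j] feval_no_choice_fm
    by (auto simp: next_state_fm_def apply_tr_def cfg_state_def)
next
  case False
  then show "k < nq \<Longrightarrow> ?thesis" using bl feval_no_choice_fm
    by (auto simp: next_state_fm_def guided_step_no_choice encodes_cfg_def feval_chosen_fm)
qed

lemma feval_next_head_fm: "i < P \<Longrightarrow> feval vs (next_head_fm p cb i) = (cfg_head (guided_step cs c) = i)"
proof (cases "\<exists>j. chosen cs c j")
  case True
  then obtain j where j: "chosen cs c j" by blast
  have A: "\<forall>j'<nd. feval vs (chosen_fm p cb j') = (j' = j)" using j chosen_unique feval_chosen_fm by blast
  have "feval vs (fm_Or (map (\<lambda>i'. if mv (tr_move (ds ! j)) i' = i then head_fm p i' else FC False) [0..<P]))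
        = (\<exists>i'<P. mv (tr_move (ds ! j)) i' = i \<and> cfg_head c = i')"
    by (auto simp: feval_head_fm)
  also have "\<dots> = (mv (tr_move (ds ! j)) (cfg_head c) = i)" using hP by auto
  finally have inner: "feval vs (fm_Or (map (\<lambda>i'. if mv (tr_move (ds ! j)) i' = i then head_fm p i' else FC False) [0..<P]))
        = (mv (tr_move (ds ! j)) (cfg_head c) = i)" .
  then show "i < P \<Longrightarrow> ?thesis" using j guided_step_chosen[OF j] chosen_lt[OF j] feval_no_choice_fm A inner
    by (auto simp: next_head_fm_def apply_tr_def cfg_head_def)
next
  case False
  then show "i < P \<Longrightarrow> ?thesis" using feval_no_choice_fm
    by (auto simp: next_head_fm_def guided_step_no_choice feval_head_fm feval_chosen_fm)
qed

lemma feval_next_cell_fm: "i < P \<Longrightarrow> s < ns \<Longrightarrow> feval vs (next_cell_fm p cb i s) = (cfg_tape (guided_step cs c) i = ss ! s)"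
proof (cases "\<exists>j. chosen cs c j")
  case True
  then obtain j where j: "chosen cs c j" by blast
  have A: "\<forall>j'<nd. feval vs (chosen_fm p cb j') = (j' = j)" using j chosen_unique feval_chosen_fm by blast
  show "i < P \<Longrightarrow> s < ns \<Longrightarrow> ?thesis" using j guided_step_chosen[OF j] chosen_lt[OF j] feval_no_choice_fm A bl
    by (auto simp: next_cell_fm_def apply_tr_def cfg_tape_def feval_head_fm encodes_cfg_def)
next
  case False
  then show "i < P \<Longrightarrow> s < ns \<Longrightarrow> ?thesis" using feval_no_choice_fm bl
    by (auto simp: next_cell_fm_def guided_step_no_choice feval_head_fm feval_chosen_fm encodes_cfg_def)
qed

lemma encodes_cfg_step_fms: "encodes_cfg (X @ map (feval vs) (step_fms p cb) @ Y) (length X) (guided_step cs c)"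
  unfolding step_fms_def by (rule encodes_cfg_block_fms) (auto simp: feval_next_state_fm feval_next_head_fm feval_next_cell_fm)

end
end

text \<open>\<open>step_layers cb0 t0 t b\<close> simulates steps \<open>t0, ..., t0 + t - 1\<close> after \<open>b\<close> wires: each
  step reads the previous configuration from the last \<open>block_len\<close> wires and the choice bits
  of step \<open>t'\<close> from the wires \<open>cb0 + t' * nd + j\<close>.\<close>

fun step_layers :: "nat \<Rightarrow> nat \<Rightarrow> nat \<Rightarrow> nat \<Rightarrow> gate list" where
  "step_layers cb0 t0 0 b = []"
| "step_layers cb0 t0 (Suc t) b = fm_layer b (step_fms (b - block_len) (cb0 + t0 * nd)) @
     step_layers cb0 (Suc t0) t (b + length (fm_layer b (step_fms (b - block_len) (cb0 + t0 * nd))))"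

lemma length_step_fms[simp]: "length (step_fms p cb) = block_len"
  by (simp add: step_fms_def)

lemma fm_wf_state_fm: "p + nq \<le> b \<Longrightarrow> fm_wf b (state_fm p q)"
  by (auto simp: state_fm_def)

lemma fm_wf_cell_fm: "i < P \<Longrightarrow> p + block_len \<le> b \<Longrightarrow> fm_wf b (cell_fm p i a)"
proof -
  assume i: "i < P" and pb: "p + block_len \<le> b"
  have "\<forall>s<ns. cell_pos p i s < b" using cell_pos_lt[OF i, of _ p] pb by (meson less_le_trans)
  then show ?thesis by (auto simp: cell_fm_def)
qed

lemma fm_wf_head_fm: "i < P \<Longrightarrow> p + block_len \<le> b \<Longrightarrow> fm_wf b (head_fm p i)"
  by (auto simp: head_fm_def head_pos_def block_len_def)

lemma fm_wf_read_fm: "p + block_len \<le> b \<Longrightarrow> fm_wf b (read_fm p a)"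
  by (auto simp: read_fm_def fm_wf_head_fm fm_wf_cell_fm)

lemma fm_wf_chosen_fm: "p + block_len \<le> b \<Longrightarrow> cb + nd \<le> b \<Longrightarrow> j < nd \<Longrightarrow> fm_wf b (chosen_fm p cb j)"
  by (auto simp: chosen_fm_def first_fm_def applicable_fm_def fm_wf_read_fm block_len_def intro!: fm_wf_state_fm)

lemma fm_wf_no_choice_fm: "p + block_len \<le> b \<Longrightarrow> cb + nd \<le> b \<Longrightarrow> fm_wf b (no_choice_fm p cb)"
  by (auto simp: no_choice_fm_def fm_wf_chosen_fm)

lemma fm_wf_step_fms:
  assumes "p + block_len \<le> b" "cb + nd \<le> b"
  shows "\<forall>f \<in> set (step_fms p cb). fm_wf b f"
proof -
  have a: "k < nq \<Longrightarrow> fm_wf b (next_state_fm p cb k)" for k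
    using assms by (auto simp: next_state_fm_def fm_wf_no_choice_fm fm_wf_chosen_fm block_len_def)
  have h: "i < P \<Longrightarrow> fm_wf b (next_head_fm p cb i)" for i
    using assms by (auto simp: next_head_fm_def fm_wf_no_choice_fm fm_wf_chosen_fm fm_wf_head_fm)
  have c: "i < P \<Longrightarrow> s < ns \<Longrightarrow> fm_wf b (next_cell_fm p cb i s)" for i s
    using assms cell_pos_lt[of i s p] by (auto simp: next_cell_fm_def fm_wf_no_choice_fm fm_wf_chosen_fm fm_wf_head_fm)
  have "r < P * ns \<Longrightarrow> r div ns < P \<and> r mod ns < ns" for r
    by (metis less_mult_imp_div_less mod_less_divisor mult_zero_right neq0_conv not_less0)
  then show ?thesis unfolding step_fms_def set_block_fms using a h c by auto
qed

lemma gates_wf_step_layers: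
  "block_len \<le> b \<Longrightarrow> cb0 + (t0 + t) * nd \<le> b \<Longrightarrow> gates_wf b (step_layers cb0 t0 t b)"
proof (induction t arbitrary: t0 b)
  case 0 then show ?case by simp
next
  case (Suc t)
  let ?L = "fm_layer b (step_fms (b - block_len) (cb0 + t0 * nd))"
  have le: "cb0 + t0 * nd + nd \<le> b" using Suc.prems(2) by (simp add: algebra_simps)
  have w1: "gates_wf b ?L" by (rule gates_wf_fm_layer) (rule fm_wf_step_fms, use Suc.prems le in auto)
  have w2: "gates_wf (b + length ?L) (step_layers cb0 (Suc t0) t (b + length ?L))"
    by (rule Suc.IH) (use Suc.prems in auto)
  show ?case using w1 w2 by (simp add: gates_wf_append)
qed

lemma run_step_layer:
  assumes enc: "encodes_cfg vs (length vs - block_len) c" and len: "block_len \<le> length vs"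
    and bounded: "cfg_bounded t c" and head: "cfg_head c < P"
    and cs: "length cs = nd" "\<forall>j<nd. vs ! (cb + j) = cs ! j" and cb: "cb + nd \<le> length vs"
  shows "\<exists>R. run_gates (fm_layer (length vs) (step_fms (length vs - block_len) cb)) vs = vs @ R
    \<and> encodes_cfg (vs @ R) (length (vs @ R) - block_len) (guided_step cs c)"
proof -
  let ?fs = "step_fms (length vs - block_len) cb"
  have "\<forall>f \<in> set ?fs. fm_wf (length vs) f"
    using len cb by (intro fm_wf_step_fms) auto
  then obtain R where R: "run_gates (fm_layer (length vs) ?fs) vs = vs @ R @ map (feval vs) ?fs"
    using run_fm_layer by blast
  have "encodes_cfg ((vs @ R) @ map (feval vs) ?fs @ []) (length (vs @ R)) (guided_step cs c)"
    using encodes_cfg_step_fms[OF enc bounded head cs] .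
  then show ?thesis using R by (intro exI[of _ "R @ map (feval vs) ?fs"]) simp
qed

lemma run_step_layers:
  assumes choices: "\<forall>t' < T. \<forall>j < nd. xin ! (cb0 + t' * nd + j) = ch t' ! j"
    and len_ch: "\<forall>t'. length (ch t') = nd" and cb0: "cb0 + T * nd \<le> length xin"
    and bounded: "cfg_bounded 0 c0" and "T < P"
    and "block_len \<le> length vs" and "length xin \<le> length vs" and "\<forall>i<length xin. vs ! i = xin ! i"
    and "encodes_cfg vs (length vs - block_len) (guided_run ch t0 c0)" and "t0 + t \<le> T"
  shows "\<exists>R. run_gates (step_layers cb0 t0 t (length vs)) vs = vs @ R
    \<and> encodes_cfg (vs @ R) (length (vs @ R) - block_len) (guided_run ch (t0 + t) c0)"
  using assms(6-10)
proof (induction t arbitrary: t0 vs)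
  case (Suc t)
  let ?cb = "cb0 + t0 * nd"
  have "?cb + nd = cb0 + Suc t0 * nd" by simp
  also have "\<dots> \<le> cb0 + T * nd" using Suc.prems(5) by (intro add_left_mono mult_right_mono) auto
  finally have cb: "?cb + nd \<le> length xin" using cb0 by linarith
  have bd: "cfg_bounded t0 (guided_run ch t0 c0)" using cfg_bounded_guided_run[OF bounded] .
  then have hd: "cfg_head (guided_run ch t0 c0) < P"
    using Suc.prems(5) \<open>T < P\<close> by (simp add: cfg_bounded_def)
  have chs: "\<forall>j<nd. vs ! (?cb + j) = ch t0 ! j"
    using Suc.prems(3) choices Suc.prems(5) cb by (auto simp: add.assoc)
  have cbv: "?cb + nd \<le> length vs" using cb Suc.prems(2) by linarith
  obtain R1 where R1: "run_gates (fm_layer (length vs) (step_fms (length vs - block_len) ?cb)) vs = vs @ R1"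
    and enc1: "encodes_cfg (vs @ R1) (length (vs @ R1) - block_len) (guided_run ch (Suc t0) c0)"
    using run_step_layer[OF Suc.prems(4) Suc.prems(1) bd hd len_ch[rule_format] chs cbv] by auto
  obtain R2 where R2: "run_gates (step_layers cb0 (Suc t0) t (length (vs @ R1))) (vs @ R1) = vs @ R1 @ R2"
    and enc2: "encodes_cfg (vs @ R1 @ R2) (length (vs @ R1 @ R2) - block_len) (guided_run ch (Suc t0 + t) c0)"
    using Suc.IH[of "vs @ R1" "Suc t0"] Suc.prems enc1 by (auto simp: nth_append)
  have "length (vs @ R1) = length vs + length (fm_layer (length vs) (step_fms (length vs - block_len) ?cb))"
    using R1 length_run_gates by metis
  then have "run_gates (step_layers cb0 t0 (Suc t) (length vs)) vs = vs @ R1 @ R2"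
    using R1 R2 by (simp add: run_gates_append)
  then show ?case using enc2 by (intro exI[of _ "R1 @ R2"]) simp
qed (auto intro: exI[of _ "[]"])

definition size_base :: nat where
  "size_base = 2 * (P + nd + nq + ns) + 3"

lemma size_base_bounds:
  "2 * P < size_base" "2 * nd < size_base" "2 * nq < size_base" "2 * ns < size_base"
  "3 \<le> size_base" "1 \<le> size_base"
  by (simp_all add: size_base_def)

lemma fsize_if_le: "fsize f \<le> x \<Longrightarrow> fsize g \<le> x \<Longrightarrow> fsize (if b then f else g) \<le> x"
  by simp

lemmas fsize_le_pow_intros =
  fsize_fm_Or_le_pow fsize_fm_And_le_pow fsize_FA_le_pow fsize_FO_le_pow fsize_FN_le_pow
  fsize_FV_le_pow fsize_FC_le_pow fsize_if_le size_base_bounds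

lemma fsize_head_fm: "fsize (head_fm p i) \<le> size_base ^ e"
  unfolding head_fm_def by (intro fsize_le_pow_intros)

lemma fsize_state_fm: "fsize (state_fm p q) \<le> size_base ^ Suc e"
  unfolding state_fm_def by (intro fsize_le_pow_intros)

lemma fsize_cell_fm: "fsize (cell_fm p i a) \<le> size_base ^ Suc e"
  unfolding cell_fm_def by (intro fsize_le_pow_intros)

lemma fsize_read_fm: "fsize (read_fm p a) \<le> size_base ^ Suc (Suc (Suc e))"
  unfolding read_fm_def by (intro fsize_le_pow_intros fsize_head_fm fsize_cell_fm)

lemma fsize_applicable_fm: "fsize (applicable_fm p t) \<le> size_base ^ Suc (Suc (Suc (Suc e)))"
  unfolding applicable_fm_def by (intro fsize_le_pow_intros fsize_state_fm fsize_read_fm)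

lemma fsize_first_fm: "j \<le> nd \<Longrightarrow> fsize (first_fm cb j) \<le> size_base ^ Suc (Suc (Suc e))"
  unfolding first_fm_def
  by (intro fsize_le_pow_intros) (use size_base_bounds(2) in \<open>auto simp: size_base_def\<close>)

lemma fsize_chosen_fm: "j < nd \<Longrightarrow> fsize (chosen_fm p cb j) \<le> size_base ^ Suc (Suc (Suc (Suc (Suc e))))"
  unfolding chosen_fm_def by (intro fsize_le_pow_intros fsize_first_fm fsize_applicable_fm) simp

lemma fsize_no_choice_fm: "fsize (no_choice_fm p cb) \<le> size_base ^ Suc (Suc (Suc (Suc (Suc (Suc (Suc e))))))"
  unfolding no_choice_fm_def by (intro fsize_le_pow_intros fsize_chosen_fm) simp

lemma fsize_step_fms: "\<forall>f \<in> set (step_fms p cb). fsize f \<le> size_base ^ 10"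
proof -
  have ten: "(10::nat) = Suc (Suc (Suc (Suc (Suc (Suc (Suc (Suc (Suc (Suc 0)))))))))" by simp
  have "fsize (next_state_fm p cb k) \<le> size_base ^ 10" for k
    unfolding next_state_fm_def ten
    by (intro fsize_le_pow_intros fsize_no_choice_fm fsize_chosen_fm) (simp add: size_base_def)
  moreover have "fsize (next_head_fm p cb i) \<le> size_base ^ 10" for i
    unfolding next_head_fm_def ten
    by (intro fsize_le_pow_intros fsize_no_choice_fm fsize_chosen_fm fsize_head_fm) (simp add: size_base_def)
  moreover have "fsize (next_cell_fm p cb i s) \<le> size_base ^ 10" for i s
    unfolding next_cell_fm_def ten
    by (intro fsize_le_pow_intros fsize_no_choice_fm fsize_chosen_fm fsize_head_fm) (simp add: size_base_def)
  ultimately show ?thesis unfolding step_fms_def set_block_fms by auto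
qed

lemma length_step_layers: "length (step_layers cb0 t0 t b) \<le> t * (block_len * (size_base ^ 10 + 1))"
proof (induction t arbitrary: t0 b)
  case (Suc t)
  have "length (fm_layer b (step_fms (b - block_len) (cb0 + t0 * nd))) \<le> block_len * (size_base ^ 10 + 1)"
    using length_fm_layer_le[OF fsize_step_fms] by simp
  then show ?case using Suc.IH by (simp add: add_mono)
qed simp

end

section \<open>The verifier circuit\<close>

lemma sym_eq_iff: "sym b = a \<longleftrightarrow> (b \<and> a = 2) \<or> (\<not> b \<and> a = 1)"
  by (auto simp: sym_def)

locale verifier_sim = ntm_sim +
  fixes N kl :: nat and Hc :: circuit and T L m :: nat
    and enc_bit :: "nat \<Rightarrow> fm" and enc :: "bool list \<Rightarrow> bool list"
  assumes wf_H: "circ_wf Hc" and cin_H: "cin Hc = kl + N" and couts_H: "length (couts Hc) = m"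
    and T_less_P: "T < P" and m_less_P: "m < P"
    and length_enc: "\<forall>key. length key = kl \<longrightarrow> length (enc key) = L"
    and fm_wf_enc_bit: "\<forall>i<L. fm_wf (N + kl) (enc_bit i)"
    and feval_enc_bit: "\<forall>xin. N + kl \<le> length xin \<longrightarrow> (\<forall>i<L. feval xin (enc_bit i) = enc (take kl (drop N xin)) ! i)"
begin

text \<open>The verifier reads \<open>y\<close> (\<open>N\<close> bits), a key (\<open>kl\<close> bits) and \<open>T\<close> choice vectors of
  \<open>nd\<close> bits.  The input of \<open>M\<close> is \<open>enc key\<close>, whose bits are computed by the formulas
  \<open>enc_bit\<close>; the verifier accepts iff the guided run of \<open>T\<close> steps ends in an accepting
  configuration whose tape output is the hash value of \<open>key @ y\<close>.\<close>

definition n_inputs :: nat where "n_inputs = N + kl + T * nd"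
definition hash_ins :: "nat list" where "hash_ins = [N..<N + kl] @ [0..<N]"
definition hash_gates :: "gate list" where "hash_gates = map (map_gate (relabel hash_ins n_inputs)) (cgates Hc)"
definition init_fms :: "fm list" where
  "init_fms = block_fms (\<lambda>k. FC (q0 M = qs ! k)) (\<lambda>i. FC (i = 0))
     (\<lambda>i s. if i < L then (if ss ! s = 2 then enc_bit i else if ss ! s = 1 then FN (enc_bit i) else FC False)
            else FC (ss ! s = 0))"

definition hash_end :: nat where "hash_end = n_inputs + length hash_gates"
definition init_gates :: "gate list" where "init_gates = fm_layer hash_end init_fms"
definition init_end :: nat where "init_end = hash_end + length init_gates"
definition sim_gates :: "gate list" where "sim_gates = step_layers (N + kl) 0 T init_end"
definition sim_end :: nat where "sim_end = init_end + length sim_gates"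
definition hash_out :: "nat \<Rightarrow> nat" where "hash_out i = relabel hash_ins n_inputs (couts Hc ! i)"
definition accept_fm :: "nat \<Rightarrow> fm" where
  "accept_fm p = FA (state_fm p (qacc M)) (FA (fm_And (map (\<lambda>i. FO (FA (FV (hash_out i)) (cell_fm p i 2)) (FA (FN (FV (hash_out i))) (cell_fm p i 1))) [0..<m]))
      (FA (FN (cell_fm p m 1)) (FN (cell_fm p m 2))))"

definition check_gates :: "gate list" where "check_gates = fm_layer sim_end [accept_fm (sim_end - block_len)]"
definition choice_bits :: "bool list \<Rightarrow> nat \<Rightarrow> bool list" where
  "choice_bits u t = map (\<lambda>j. u ! (kl + t * nd + j)) [0..<nd]"

definition verifier :: circuit where
  "verifier = \<lparr> cin = n_inputs, cgates = hash_gates @ init_gates @ sim_gates @ check_gates, couts = [sim_end + length check_gates - 1] \<rparr>"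

lemma length_hash_ins: "length hash_ins = cin Hc" by (simp add: hash_ins_def cin_H)

lemma hash_ins_lt: "\<forall>i \<in> set hash_ins. i < n_inputs" by (auto simp: hash_ins_def n_inputs_def)

lemma hash_out_lt: "i < m \<Longrightarrow> hash_out i < hash_end"
proof -
  assume i: "i < m"
  have "couts Hc ! i < cin Hc + length (cgates Hc)" using wf_H i couts_H by (auto simp: circ_wf_def)
  then show ?thesis using hash_ins_lt length_hash_ins
    by (auto simp: hash_out_def relabel_def hash_end_def hash_gates_def) (metis nth_mem trans_less_add1)
qed

lemma block_len_le_init: "block_len \<le> init_end - hash_end"
  by (simp add: init_end_def init_gates_def length_fm_layer init_fms_def)

lemma n_inputs_le_hash_end: "n_inputs \<le> hash_end" by (simp add: hash_end_def)

lemma hash_end_le_init_end: "hash_end \<le> init_end" by (simp add: init_end_def)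

lemma init_end_le_sim_end: "init_end \<le> sim_end" by (simp add: sim_end_def)

lemma fm_wf_init_fms: "\<forall>f \<in> set init_fms. fm_wf hash_end f"
proof -
  have "\<forall>i<L. fm_wf hash_end (enc_bit i)" using fm_wf_enc_bit fm_wf_mono[of "N + kl" _ hash_end] n_inputs_le_hash_end
    by (auto simp: n_inputs_def)
  then show ?thesis unfolding init_fms_def set_block_fms by auto
qed

lemma fm_wf_accept_fm: "fm_wf sim_end (accept_fm (sim_end - block_len))"
proof -
  have bb: "sim_end - block_len + block_len \<le> sim_end" using block_len_le_init hash_end_le_init_end init_end_le_sim_end by linarith
  have "\<forall>i<m. hash_out i < sim_end" using hash_out_lt hash_end_le_init_end init_end_le_sim_end by (meson less_le_trans)
  then show ?thesis using bb m_less_P block_len_le_init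
    by (auto simp: accept_fm_def fm_wf_cell_fm intro!: fm_wf_state_fm simp: block_len_def)
qed

lemma nth_run_hash_gates:
  assumes ly: "length y = N" and lu: "length u = kl + T * nd" and i: "i < m"
  shows "run_gates hash_gates (y @ u) ! hash_out i = ceval Hc (take kl u @ y) ! i"
proof -
  have vals: "map ((!) (y @ u)) hash_ins = take kl u @ y"
    using ly lu by (auto intro!: nth_equalityI simp: hash_ins_def nth_append)
  have wf_Hg: "gates_wf (length hash_ins) (cgates Hc)"
    using wf_H length_hash_ins by (simp add: circ_wf_iff_gates_wf)
  have len: "length (y @ u) = n_inputs" using ly lu by (simp add: n_inputs_def)
  have "couts Hc ! i < length hash_ins + length (cgates Hc)"
    using wf_H i couts_H length_hash_ins by (auto simp: circ_wf_def)
  then have "run_gates hash_gates (y @ u) ! hash_out i = run_gates (cgates Hc) (take kl u @ y) ! (couts Hc ! i)"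
    using run_gates_relabel[OF wf_Hg, of "y @ u" "couts Hc ! i", unfolded len] hash_ins_lt
    by (simp add: hash_gates_def hash_out_def vals)
  then show ?thesis using i couts_H by (simp add: ceval_def wires_eq_run_gates)
qed

lemma encodes_cfg_init:
  assumes ly: "length y = N" and lu: "length u = kl + T * nd"
  shows "encodes_cfg (run_gates (hash_gates @ init_gates) (y @ u)) (init_end - block_len)
    (ntm_init M (enc (take kl u)))"
proof -
  define v1 where "v1 = run_gates hash_gates (y @ u)"
  have lv1: "length v1 = hash_end" using ly lu by (simp add: v1_def hash_end_def n_inputs_def)
  have enc_vals: "feval v1 (enc_bit i) = enc (take kl u) ! i" if i: "i < L" for i
  proof -
    have "feval v1 (enc_bit i) = feval (y @ u) (enc_bit i)"
      using fm_wf_enc_bit i ly lu by (intro feval_cong[of "N + kl"]) (auto simp: v1_def nth_run_gates_prefix)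
    also have "\<dots> = enc (take kl u) ! i" using feval_enc_bit i ly lu by simp
    finally show ?thesis .
  qed
  have "length (enc (take kl u)) = L" using length_enc lu by simp
  then have enc0: "encodes_cfg ((v1 @ R) @ map (feval v1) init_fms @ []) (length (v1 @ R)) (ntm_init M (enc (take kl u)))"
    for R unfolding init_fms_def
    by (intro encodes_cfg_block_fms) (auto simp: enc_vals ntm_init_def cfg_state_def cfg_head_def cfg_tape_def sym_eq_iff)
  obtain R where R: "run_gates init_gates v1 = v1 @ R @ map (feval v1) init_fms"
    using run_fm_layer[of init_fms v1] fm_wf_init_fms lv1 by (auto simp: init_gates_def)
  then have "length (v1 @ R) = init_end - block_len"
    using length_run_gates[of init_gates v1] lv1 by (simp add: init_end_def init_fms_def)
  then show ?thesis using enc0[of R] R by (simp add: run_gates_append v1_def[symmetric])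
qed

lemma choice_bits_nth:
  assumes ly: "length y = N" and lu: "length u = kl + T * nd" and "t < T" and "j < nd"
  shows "(y @ u) ! (N + kl + t * nd + j) = choice_bits u t ! j"
proof -
  have "t * nd + j < Suc t * nd" using \<open>j < nd\<close> by simp
  also have "\<dots> \<le> T * nd" using \<open>t < T\<close> by (intro mult_right_mono) auto
  finally show ?thesis using assms by (simp add: choice_bits_def nth_append add.assoc)
qed

lemma encodes_cfg_sim:
  assumes ly: "length y = N" and lu: "length u = kl + T * nd"
  shows "encodes_cfg (run_gates (hash_gates @ init_gates @ sim_gates) (y @ u)) (sim_end - block_len)
    (guided_run (choice_bits u) T (ntm_init M (enc (take kl u))))"
proof -
  define v2 where "v2 = run_gates (hash_gates @ init_gates) (y @ u)"
  define c0 where "c0 = ntm_init M (enc (take kl u))"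
  have lv2: "length v2 = init_end" using ly lu by (simp add: v2_def init_end_def hash_end_def n_inputs_def)
  have choices: "\<forall>t < T. \<forall>j < nd. (y @ u) ! (N + kl + t * nd + j) = choice_bits u t ! j"
    using choice_bits_nth[OF ly lu] by blast
  have len_ch: "\<forall>t. length (choice_bits u t) = nd" by (simp add: choice_bits_def)
  have cb0: "N + kl + T * nd \<le> length (y @ u)" using ly lu by simp
  have bounded: "cfg_bounded 0 c0" using cfg_bounded_ntm_init by (simp add: c0_def)
  have pre: "\<forall>i<length (y @ u). v2 ! i = (y @ u) ! i" by (simp add: v2_def nth_run_gates_prefix)
  have lens: "block_len \<le> length v2" "length (y @ u) \<le> length v2"
    using lv2 block_len_le_init ly lu by (simp_all add: v2_def)
  have "encodes_cfg v2 (length v2 - block_len) (guided_run (choice_bits u) 0 c0)"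
    using encodes_cfg_init[OF ly lu] lv2 by (simp add: v2_def c0_def)
  from run_step_layers[OF choices len_ch cb0 bounded T_less_P lens pre this, of T]
  obtain R where R: "run_gates sim_gates v2 = v2 @ R"
    and enc: "encodes_cfg (v2 @ R) (length (v2 @ R) - block_len) (guided_run (choice_bits u) T c0)"
    by (auto simp: sim_gates_def lv2)
  have "length (v2 @ R) = sim_end"
    using R length_run_gates[of sim_gates v2] lv2 by (simp add: sim_end_def)
  moreover have "run_gates (hash_gates @ init_gates @ sim_gates) (y @ u) = run_gates sim_gates v2"
    by (simp add: v2_def run_gates_append)
  ultimately show ?thesis using R enc by (simp add: c0_def)
qed

text \<open>\<open>tape_output\<close> only inspects the cells \<open>0..m\<close>, which are simulated since \<open>m < P\<close>.\<close>

lemma feval_accept_fm: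
  assumes enc: "encodes_cfg vs (sim_end - block_len) c" and bounded: "cfg_bounded T c"
    and hash: "\<forall>i<m. vs ! hash_out i = z ! i" and lz: "length z = m"
  shows "feval vs (accept_fm (sim_end - block_len)) = (cfg_state c = qacc M \<and> tape_output (cfg_tape c) z)"
proof -
  have head: "cfg_head c < P" using bounded T_less_P by (simp add: cfg_bounded_def)
  have cell: "i < P \<Longrightarrow> feval vs (cell_fm (sim_end - block_len) i a) = (cfg_tape c i = a)" for i a
    by (rule feval_cell_fm[OF enc bounded head])
  have "feval vs (state_fm (sim_end - block_len) (qacc M)) = (cfg_state c = qacc M)"
    by (rule feval_state_fm[OF enc bounded head])
  then show ?thesis
    using cell m_less_P hash unfolding accept_fm_def tape_output_def lz by (auto simp: sym_def)
qed

lemma ceval_verifier: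
  assumes ly: "length y = N" and lu: "length u = kl + T * nd"
  defines "c \<equiv> guided_run (choice_bits u) T (ntm_init M (enc (take kl u)))"
  shows "ceval verifier (y @ u) = [cfg_state c = qacc M \<and> tape_output (cfg_tape c) (ceval Hc (take kl u @ y))]"
proof -
  define v3 where "v3 = run_gates (hash_gates @ init_gates @ sim_gates) (y @ u)"
  have lv3: "length v3 = sim_end" using ly lu by (simp add: v3_def sim_end_def init_end_def hash_end_def n_inputs_def)
  have "v3 = run_gates (init_gates @ sim_gates) (run_gates hash_gates (y @ u))"
    by (simp add: v3_def run_gates_append)
  moreover have "length (run_gates hash_gates (y @ u)) = hash_end"
    using ly lu by (simp add: hash_end_def n_inputs_def)
  ultimately have "\<forall>i<m. v3 ! hash_out i = ceval Hc (take kl u @ y) ! i"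
    using nth_run_hash_gates[OF ly lu] hash_out_lt nth_run_gates_prefix by metis
  then have acc: "feval v3 (accept_fm (sim_end - block_len)) = (cfg_state c = qacc M \<and> tape_output (cfg_tape c) (ceval Hc (take kl u @ y)))"
    using feval_accept_fm encodes_cfg_sim[OF ly lu] cfg_bounded_guided_run cfg_bounded_ntm_init
    by (simp add: c_def v3_def ceval_def couts_H)
  obtain R where R: "run_gates check_gates v3 = (v3 @ R) @ [feval v3 (accept_fm (sim_end - block_len))]"
    using run_fm_layer[of "[accept_fm (sim_end - block_len)]" v3] fm_wf_accept_fm lv3 by (auto simp: check_gates_def)
  then have "length (v3 @ R) = sim_end + length check_gates - 1"
    using length_run_gates[of check_gates v3] lv3 by simp
  moreover have "run_gates (cgates verifier) (y @ u) = run_gates check_gates v3"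
    by (simp add: verifier_def run_gates_append v3_def)
  ultimately have "run_gates (cgates verifier) (y @ u) ! (sim_end + length check_gates - 1) = feval v3 (accept_fm (sim_end - block_len))"
    using R by (metis nth_append_length)
  then show ?thesis using acc by (simp add: ceval_def wires_eq_run_gates verifier_def)
qed

lemma circ_wf_verifier: "circ_wf verifier"
proof -
  have w1: "gates_wf n_inputs hash_gates" unfolding hash_gates_def
    by (rule gates_wf_relabel) (use wf_H length_hash_ins hash_ins_lt in \<open>auto simp: circ_wf_iff_gates_wf\<close>)
  have w2: "gates_wf hash_end init_gates" unfolding init_gates_def by (rule gates_wf_fm_layer[OF fm_wf_init_fms])
  have w3: "gates_wf init_end sim_gates" unfolding sim_gates_def
    by (rule gates_wf_step_layers) (use block_len_le_init n_inputs_le_hash_end hash_end_le_init_end in \<open>auto simp: n_inputs_def\<close>)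
  have w4: "gates_wf sim_end check_gates" unfolding check_gates_def by (rule gates_wf_fm_layer) (use fm_wf_accept_fm in auto)
  have "gates_wf n_inputs (hash_gates @ init_gates @ sim_gates @ check_gates)" using w1 w2 w3 w4
    by (simp add: gates_wf_append hash_end_def init_end_def sim_end_def add.assoc)
  moreover have "sim_end + length check_gates - 1 < n_inputs + length (hash_gates @ init_gates @ sim_gates @ check_gates)"
    by (simp add: check_gates_def length_fm_layer sim_end_def init_end_def hash_end_def)
  ultimately show ?thesis by (simp add: circ_wf_iff_gates_wf verifier_def)
qed

lemma cin_verifier: "cin verifier = N + (kl + T * nd)"
  by (simp add: verifier_def n_inputs_def)

lemma length_couts_verifier: "length (couts verifier) = 1"
  by (simp add: verifier_def)

lemma fsize_accept_fm: "fsize (accept_fm p) \<le> size_base ^ 6"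
proof -
  have "fsize (accept_fm p) \<le> size_base ^ Suc (Suc (Suc (Suc (Suc (Suc (0))))))"
    unfolding accept_fm_def by (intro fsize_le_pow_intros fsize_state_fm fsize_cell_fm) (use m_less_P size_base_bounds in auto)
  moreover have "Suc (Suc (Suc (Suc (Suc (Suc (0)))))) = (6::nat)" by simp
  ultimately show ?thesis by metis
qed

lemma csize_verifier:
  assumes ebs: "\<forall>i<L. fsize (enc_bit i) = 1"
  shows "csize verifier \<le> N + kl + T * nd + length (cgates Hc) + 3 * (nq + P + P * ns)
    + T * ((nq + P + P * ns) * ((2 * (P + nd + nq + ns) + 3) ^ 10 + 1)) + (2 * (P + nd + nq + ns) + 3) ^ 6 + 2"
proof -
  have l2: "length init_gates \<le> 3 * block_len"
  proof -
    have "\<forall>f\<in>set init_fms. fsize f \<le> 2" using ebs unfolding init_fms_def set_block_fms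
      by (auto dest: less_mult_imp_div_less)
    then have "length init_gates \<le> length init_fms * 3" using length_fm_layer_le[of init_fms 2 hash_end] by (simp add: init_gates_def)
    then show ?thesis by (simp add: init_fms_def)
  qed
  have l3: "length sim_gates \<le> T * (block_len * (size_base ^ 10 + 1))" unfolding sim_gates_def by (rule length_step_layers)
  have l4: "length check_gates \<le> size_base ^ 6 + 1" using length_fm_layer_le[of "[accept_fm (sim_end - block_len)]" "size_base ^ 6" sim_end] fsize_accept_fm
    by (simp add: check_gates_def)
  have "csize verifier \<le> N + kl + T * nd + length (cgates Hc) + 3 * block_len
    + T * (block_len * (size_base ^ 10 + 1)) + size_base ^ 6 + 2"
    using l2 l3 l4 by (simp add: csize_def verifier_def n_inputs_def hash_gates_def)
  then show ?thesis by (simp only: block_len_def size_base_def)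
qed

lemma accepting_run_of_verifier:
  assumes ly: "length y = N" and acc: "nd_accepts verifier (kl + T * nd) y"
  shows "\<exists>key. length key = kl \<and> ntm_accepts_with M (enc key) (ceval Hc (key @ y))"
proof -
  obtain u where lu: "length u = kl + T * nd" and out: "ceval verifier (y @ u) = [True]"
    using acc by (auto simp: nd_accepts_def)
  define c where "c = guided_run (choice_bits u) T (ntm_init M (enc (take kl u)))"
  have "cfg_state c = qacc M" and "tape_output (cfg_tape c) (ceval Hc (take kl u @ y))"
    using ceval_verifier[OF ly lu] out by (simp_all add: c_def)
  moreover obtain t where "(ntm_step M ^^ t) (ntm_init M (enc (take kl u))) c"
    using guided_run_sound rtranclp_imp_relpowp c_def by metis
  moreover have "c = (cfg_state c, cfg_head c, cfg_tape c)"
    by (simp add: cfg_state_def cfg_head_def cfg_tape_def)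
  ultimately have "ntm_accepts_with M (enc (take kl u)) (ceval Hc (take kl u @ y))"
    unfolding ntm_accepts_with_def by metis
  then show ?thesis using lu by (intro exI[of _ "take kl u"]) simp
qed

definition choice_witness :: "bool list \<Rightarrow> (nat \<Rightarrow> bool list) \<Rightarrow> bool list" where
  "choice_witness key ch = key @ map (\<lambda>r. ch (r div nd) ! (r mod nd)) [0..<T * nd]"

lemma length_choice_witness: "length key = kl \<Longrightarrow> length (choice_witness key ch) = kl + T * nd"
  by (simp add: choice_witness_def)

lemma choice_bits_choice_witness:
  assumes lk: "length key = kl" and len_ch: "\<forall>t. length (ch t) = nd" and t: "t < T"
  shows "choice_bits (choice_witness key ch) t = ch t"
proof (rule nth_equalityI)
  fix j assume "j < length (choice_bits (choice_witness key ch) t)"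
  then have j: "j < nd" by (simp add: choice_bits_def)
  have "t * nd + j < Suc t * nd" using j by simp
  also have "\<dots> \<le> T * nd" using t by (intro mult_right_mono) auto
  finally have "t * nd + j < T * nd" .
  moreover have "(t * nd + j) div nd = t" using div_mod_mult_add[OF j] by simp
  ultimately show "choice_bits (choice_witness key ch) t ! j = ch t ! j"
    using j lk by (simp add: choice_bits_def choice_witness_def nth_append add.assoc)
qed (simp add: choice_bits_def len_ch)

text \<open>An accepting run of length at most \<open>T\<close> is padded to exactly \<open>T\<close> guided steps:
  accepting configurations are fixed points of \<open>guided_step\<close>.\<close>

lemma verifier_accepts_run:
  assumes ly: "length y = N" and lk: "length key = kl"
    and time: "\<forall>t c. (ntm_step M ^^ t) (ntm_init M (enc key)) c \<longrightarrow> t \<le> T"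
    and acc: "ntm_accepts_with M (enc key) (ceval Hc (key @ y))"
  shows "nd_accepts verifier (kl + T * nd) y"
proof -
  obtain t h tp where run: "(ntm_step M ^^ t) (ntm_init M (enc key)) (qacc M, h, tp)"
    and out: "tape_output tp (ceval Hc (key @ y))"
    using acc unfolding ntm_accepts_with_def by blast
  obtain ch where len_ch: "\<forall>i. length (ch i) = nd" and ch: "guided_run ch t (ntm_init M (enc key)) = (qacc M, h, tp)"
    using guided_run_complete[OF run] by blast
  have "guided_run ch T (ntm_init M (enc key)) = (qacc M, h, tp)"
    using guided_run_accepting_stays[of ch t _ "T - t"] ch time run by (simp add: cfg_state_def)
  moreover have "guided_run (choice_bits (choice_witness key ch)) T (ntm_init M (enc key)) = guided_run ch T (ntm_init M (enc key))"
    using choice_bits_choice_witness[OF lk len_ch] by (intro guided_run_cong) blast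
  ultimately have "ceval verifier (y @ choice_witness key ch) = [True]"
    using ceval_verifier[OF ly length_choice_witness[OF lk]] out lk
    by (simp add: choice_witness_def cfg_state_def cfg_tape_def)
  then show ?thesis
    using length_choice_witness[OF lk] by (auto simp: nd_accepts_def)
qed

end

section \<open>The encoding of a plugged circuit\<close>

text \<open>The key enters the encoding of \<open>plug Gc Hc key\<close> only through its constant gates,
  each encoded as \<open>[False, b]\<close>; everything else depends on the key only through its length.\<close>

definition enc_plug_prefix :: "circuit \<Rightarrow> circuit \<Rightarrow> nat \<Rightarrow> bool list" where
  "enc_plug_prefix Gc Hc k = enc_nat (cin Gc) @ enc_nat (length (cgates Gc) + k + length (cgates Hc))
     @ concat (map enc_gate (cgates Gc))"

definition enc_plug_suffix :: "circuit \<Rightarrow> circuit \<Rightarrow> nat \<Rightarrow> bool list" where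
  "enc_plug_suffix Gc Hc k = concat (map enc_gate (map (map_gate (plug_relabel Gc k)) (cgates Hc)))
     @ enc_nat (length (couts Hc)) @ concat (map enc_nat (map (plug_relabel Gc k) (couts Hc)))"

lemma enc_circuit_plug:
  "enc_circuit (plug Gc Hc key) = enc_plug_prefix Gc Hc (length key) @ concat (map (\<lambda>b. [False, b]) key)
     @ enc_plug_suffix Gc Hc (length key)"
proof -
  have "concat (map enc_gate (map GConst key)) = concat (map (\<lambda>b. [False, b]) key)"
    by (induction key) (auto simp: enc_nat_def)
  then show ?thesis
    by (simp add: plug_eq enc_circuit_def enc_plug_prefix_def enc_plug_suffix_def add.assoc)
qed

lemma length_concat_key_pairs [simp]: "length (concat (map (\<lambda>b. [False, b]) key)) = 2 * length key"
  by (induction key) auto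

lemma nth_concat_key_pairs:
  "j < 2 * length key \<Longrightarrow> concat (map (\<lambda>b. [False, b]) key) ! j = (odd j \<and> key ! (j div 2))"
proof (induction key arbitrary: j)
  case (Cons b key)
  show ?case
  proof (cases j)
    case (Suc j1)
    with Cons show ?thesis by (cases j1) auto
  qed simp
qed simp

definition enc_plug_bit :: "bool list \<Rightarrow> bool list \<Rightarrow> nat \<Rightarrow> nat \<Rightarrow> nat \<Rightarrow> fm" where
  "enc_plug_bit pre post k N i =
     (if i < length pre then FC (pre ! i)
      else if i < length pre + 2 * k then
        (if even (i - length pre) then FC False else FV (N + (i - length pre) div 2))
      else FC (post ! (i - length pre - 2 * k)))"

lemma fsize_enc_plug_bit: "fsize (enc_plug_bit pre post k N i) = 1"
  by (simp add: enc_plug_bit_def)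

lemma fm_wf_enc_plug_bit: "fm_wf (N + k) (enc_plug_bit pre post k N i)"
  by (auto simp: enc_plug_bit_def)

lemma feval_enc_plug_bit:
  assumes lk: "length key = k" and key_bits: "\<forall>j<k. xs ! (N + j) = key ! j"
  shows "feval xs (enc_plug_bit pre post k N i) = (pre @ concat (map (\<lambda>b. [False, b]) key) @ post) ! i"
proof -
  consider (pre) "i < length pre" | (mid) "length pre \<le> i" "i < length pre + 2 * k"
    | (post) "length pre + 2 * k \<le> i"
    by linarith
  then show ?thesis
  proof cases
    case mid
    define j where "j = i - length pre"
    have j: "j < 2 * length key" using mid lk by (simp add: j_def)
    then have "j div 2 < k" using lk by auto
    then show ?thesis
      using mid lk j key_bits nth_concat_key_pairs[OF j] by (simp add: enc_plug_bit_def nth_append j_def[symmetric])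
  next
    case post
    then have "\<not> i < length pre" "\<not> i - length pre < 2 * k" by auto
    with post lk show ?thesis by (simp add: enc_plug_bit_def nth_append)
  qed (simp add: enc_plug_bit_def nth_append)
qed

lemma length_enc_nat [simp]: "length (enc_nat k) = Suc k"
  by (simp add: enc_nat_def)

lemma length_enc_gate_le: "\<forall>i \<in> set (gate_args g). i < S \<Longrightarrow> length (enc_gate g) \<le> 3 * Suc S"
  by (cases g) auto

lemma length_enc_circuit_le:
  assumes "circ_wf C"
  shows "length (enc_circuit C) \<le> 5 * Suc (csize C) * Suc (csize C)"
proof -
  let ?S = "csize C"
  have "\<forall>g \<in> set (cgates C). length (enc_gate g) \<le> 3 * Suc ?S"
  proof
    fix g assume "g \<in> set (cgates C)"
    then obtain j where j: "j < length (cgates C)" "g = cgates C ! j" by (metis in_set_conv_nth)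
    have "\<forall>i \<in> set (gate_args g). i < cin C + j" using assms j by (auto simp: circ_wf_def)
    then have "\<forall>i \<in> set (gate_args g). i < ?S" using j by (auto simp: csize_def)
    then show "length (enc_gate g) \<le> 3 * Suc ?S" by (rule length_enc_gate_le)
  qed
  then have gates: "length (concat (map enc_gate (cgates C))) \<le> length (cgates C) * (3 * Suc ?S)"
    using sum_list_mono[of "cgates C" "\<lambda>g. length (enc_gate g)" "\<lambda>_. 3 * Suc ?S"]
    by (simp add: length_concat sum_list_triv o_def)
  have "length (enc_nat w) \<le> Suc ?S" if "w \<in> set (couts C)" for w
    using that assms by (auto simp: circ_wf_def csize_def)
  then have outs: "length (concat (map enc_nat (couts C))) \<le> length (couts C) * Suc ?S"
    using sum_list_mono[of "couts C" "\<lambda>w. length (enc_nat w)" "\<lambda>_. Suc ?S"]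
    by (simp add: length_concat sum_list_triv o_def)
  have "cin C \<le> ?S" "length (cgates C) \<le> ?S" "length (couts C) \<le> ?S" by (auto simp: csize_def)
  then have "length (cgates C) * (3 * Suc ?S) \<le> ?S * (3 * Suc ?S)" "length (couts C) * Suc ?S \<le> ?S * Suc ?S"
    by (intro mult_right_mono; simp)+
  then show ?thesis using gates outs \<open>cin C \<le> ?S\<close> \<open>length (cgates C) \<le> ?S\<close> \<open>length (couts C) \<le> ?S\<close>
    by (simp add: enc_circuit_def algebra_simps)
qed

section \<open>Polynomial bounds\<close>

lemma poly_bounded_iff: "poly_bounded f \<longleftrightarrow> (\<exists>c. \<forall>n. f n \<le> c * Suc n ^ c)"
proof
  assume "poly_bounded f"
  then obtain c where c: "\<forall>n. f n \<le> c * n ^ c + c" by (auto simp: poly_bounded_def)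
  have "f n \<le> (2 * c) * Suc n ^ (2 * c)" for n
  proof -
    have "n ^ c \<le> Suc n ^ (2 * c)"
      using power_mono[of n "Suc n" c] power_increasing[of c "2 * c" "Suc n"] by simp
    then have "c * n ^ c + c \<le> c * Suc n ^ (2 * c) + c * Suc n ^ (2 * c)"
      by (intro add_mono mult_left_mono) auto
    then show ?thesis using c[rule_format, of n] by simp
  qed
  then show "\<exists>c. \<forall>n. f n \<le> c * Suc n ^ c" by blast
next
  assume "\<exists>c. \<forall>n. f n \<le> c * Suc n ^ c"
  then obtain c where c: "\<forall>n. f n \<le> c * Suc n ^ c" by blast
  define C where "C = c * 2 ^ c + c"
  have "f n \<le> C * n ^ C + C" for n
  proof (cases "n = 0")
    case True
    then show ?thesis using c[rule_format, of 0] by (simp add: C_def)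
  next
    case False
    have "Suc n ^ c \<le> (2 * n) ^ c" using False by (intro power_mono) auto
    also have "\<dots> \<le> 2 ^ c * n ^ C"
      using False power_increasing[of c C n] by (simp add: power_mult_distrib C_def)
    finally have "f n \<le> c * (2 ^ c * n ^ C)" using c by (meson mult_le_mono2 order_trans)
    also have "\<dots> \<le> C * n ^ C" by (simp add: C_def mult.assoc)
    finally show ?thesis by simp
  qed
  then show "poly_bounded f" unfolding poly_bounded_def by blast
qed

lemma poly_bounded_const: "poly_bounded (\<lambda>n. a)"
  unfolding poly_bounded_def by (intro exI[of _ a]) simp

lemma poly_bounded_mono: "\<forall>n. g n \<le> f n \<Longrightarrow> poly_bounded f \<Longrightarrow> poly_bounded g"
  unfolding poly_bounded_def by (meson order_trans)

lemma poly_bounded_add: "poly_bounded f \<Longrightarrow> poly_bounded g \<Longrightarrow> poly_bounded (\<lambda>n. f n + g n)"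
proof -
  assume "poly_bounded f" "poly_bounded g"
  then obtain c1 c2 where c1: "\<forall>n. f n \<le> c1 * Suc n ^ c1" and c2: "\<forall>n. g n \<le> c2 * Suc n ^ c2"
    by (auto simp: poly_bounded_iff)
  have "f n + g n \<le> (c1 + c2) * Suc n ^ (c1 + c2)" for n
  proof -
    have "Suc n ^ c1 \<le> Suc n ^ (c1 + c2)" "Suc n ^ c2 \<le> Suc n ^ (c1 + c2)"
      by (simp_all add: power_increasing)
    then have "c1 * Suc n ^ c1 + c2 * Suc n ^ c2 \<le> (c1 + c2) * Suc n ^ (c1 + c2)"
      by (simp add: add_mult_distrib add_mono)
    then show ?thesis using c1 c2 by (meson add_mono order_trans)
  qed
  then show ?thesis unfolding poly_bounded_iff by blast
qed

lemma poly_bounded_mult: "poly_bounded f \<Longrightarrow> poly_bounded g \<Longrightarrow> poly_bounded (\<lambda>n. f n * g n)"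
proof -
  assume "poly_bounded f" "poly_bounded g"
  then obtain c1 c2 where c1: "\<forall>n. f n \<le> c1 * Suc n ^ c1" and c2: "\<forall>n. g n \<le> c2 * Suc n ^ c2"
    by (auto simp: poly_bounded_iff)
  define C where "C = c1 * c2 + c1 + c2"
  have "f n * g n \<le> C * Suc n ^ C" for n
  proof -
    have "f n * g n \<le> (c1 * Suc n ^ c1) * (c2 * Suc n ^ c2)" using c1 c2 by (intro mult_mono) auto
    also have "\<dots> = (c1 * c2) * Suc n ^ (c1 + c2)" by (simp add: power_add algebra_simps)
    also have "\<dots> \<le> C * Suc n ^ C" by (intro mult_mono power_increasing) (auto simp: C_def)
    finally show ?thesis .
  qed
  then show ?thesis unfolding poly_bounded_iff by blast
qed

lemma poly_bounded_power: "poly_bounded f \<Longrightarrow> poly_bounded (\<lambda>n. f n ^ e)"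
  by (induction e) (simp_all add: poly_bounded_const poly_bounded_mult)

section \<open>Pairwise independent hashing\<close>

lemma finite_bool_lists: "finite {xs :: bool list. length xs = n}"
  using finite_lists_length_eq[of "UNIV :: bool set" n] by simp

lemma card_bool_lists: "card {xs :: bool list. length xs = n} = 2 ^ n"
  using card_lists_length_eq[of "UNIV :: bool set" n] by simp

lemma real_card_filter: "finite A \<Longrightarrow> real (card {a\<in>A. P a}) = (\<Sum>a\<in>A. if P a then 1 else 0)"
  by (simp add: sum.inter_filter[symmetric])

context
  fixes k N m :: nat and h :: "bool list \<Rightarrow> bool list \<Rightarrow> bool list"
  assumes pairwise: "pairwise_indep k N m h"
    and length_h: "\<forall>key y. length key = k \<longrightarrow> length y = N \<longrightarrow> length (h key y) = m"
begin

private abbreviation "keys \<equiv> {key :: bool list. length key = k}"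

lemma card_keys_hash_pair:
  assumes "length y = N" "length y' = N" "y \<noteq> y'" "length z = m" "length z' = m"
  shows "real (card {key. length key = k \<and> h key y = z \<and> h key y' = z'}) = 2 ^ k / 2 ^ (2 * m)"
proof -
  have "real (card {key. length key = k \<and> h key y = z \<and> h key y' = z'}) / 2 ^ k = 1 / 2 ^ (2 * m)"
    using pairwise assms unfolding pairwise_indep_def by blast
  then show ?thesis by (simp add: field_simps)
qed

text \<open>The marginals are uniform: sum the pair counts over the value at a second point.\<close>

lemma card_keys_hash:
  assumes N: "0 < N" and ly: "length y = N" and lz: "length z = m"
  shows "real (card {key. length key = k \<and> h key y = z}) = 2 ^ k / 2 ^ m"
proof -
  define y' where "y' = (\<not> hd y) # tl y"
  have y': "length y' = N" "y \<noteq> y'" using N ly by (cases y; simp add: y'_def)+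
  let ?Z = "{z :: bool list. length z = m}"
  have "real (card {key. length key = k \<and> h key y = z}) = (\<Sum>key\<in>keys. if h key y = z then 1 else 0)"
    using real_card_filter[OF finite_bool_lists, of k "\<lambda>key. h key y = z"] by simp
  also have "\<dots> = (\<Sum>key\<in>keys. \<Sum>z'\<in>?Z. if h key y = z \<and> h key y' = z' then 1 else 0)"
  proof (rule sum.cong[OF refl])
    fix key assume "key \<in> keys"
    then have "h key y' \<in> ?Z" using length_h y' by auto
    then show "(if h key y = z then 1 else 0) = (\<Sum>z'\<in>?Z. if h key y = z \<and> h key y' = z' then 1 else (0::real))"
      using finite_bool_lists by (simp add: sum.delta)
  qed
  also have "\<dots> = (\<Sum>z'\<in>?Z. \<Sum>key\<in>keys. if h key y = z \<and> h key y' = z' then 1 else 0)"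
    by (rule sum.swap)
  also have "\<dots> = (\<Sum>z'\<in>?Z. real (card {key. length key = k \<and> h key y = z \<and> h key y' = z'}))"
    using real_card_filter[OF finite_bool_lists] by simp
  also have "\<dots> = (\<Sum>z'\<in>?Z. 2 ^ k / 2 ^ (2 * m))"
    using card_keys_hash_pair[OF ly y'(1,2) lz] by simp
  also have "\<dots> = 2 ^ k / 2 ^ m"
    by (simp add: card_bool_lists power_mult_distrib mult_2 power_add)
  finally show ?thesis .
qed

lemma sum_keys_hit:
  assumes N: "0 < N" and lz: "length z = m" and ly: "length y = N"
  shows "(\<Sum>key\<in>keys. if h key y = z then 1 else 0) = (2::real) ^ k / 2 ^ m"
  using card_keys_hash[OF N ly lz] real_card_filter[OF finite_bool_lists, of k "\<lambda>key. h key y = z"] by simp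

lemma sum_keys_hit_pair:
  assumes N: "0 < N" and lz: "length z = m" and ly: "length y = N" and ly': "length y' = N"
  shows "(\<Sum>key\<in>keys. (if h key y = z then 1 else 0) * (if h key y' = z then 1 else 0))
    = (if y' = y then 2 ^ k / 2 ^ m else (2::real) ^ k / 2 ^ (2 * m))"
proof -
  have "(\<Sum>key\<in>keys. (if h key y = z then 1 else 0) * (if h key y' = z then 1 else 0))
      = (\<Sum>key\<in>keys. if h key y = z \<and> h key y' = z then 1 else (0::real))"
    by (rule sum.cong) auto
  also have "\<dots> = real (card {key. length key = k \<and> h key y = z \<and> h key y' = z})"
    using real_card_filter[OF finite_bool_lists, of k "\<lambda>key. h key y = z \<and> h key y' = z"] by simp
  finally show ?thesis
    using card_keys_hash[OF N ly lz] card_keys_hash_pair[OF ly ly' _ lz lz] by auto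
qed

text \<open>Second moment method: over a random key, the number of inputs in \<open>Y\<close> hashed to \<open>z\<close> has
  mean \<open>|Y|/2^m\<close> and variance at most \<open>|Y|/2^m\<close>, so it vanishes only for few keys when \<open>Y\<close>
  is large.\<close>

definition hits :: "(bool list \<Rightarrow> bool list \<Rightarrow> bool list) \<Rightarrow> bool list set \<Rightarrow> bool list \<Rightarrow> bool list \<Rightarrow> real" where
  "hits h' Y z key = (\<Sum>y\<in>Y. if h' key y = z then 1 else 0)"

context
  fixes Y :: "bool list set" and z :: "bool list"
  assumes N: "0 < N" and lz: "length z = m" and Y: "Y \<subseteq> {y. length y = N}"
begin

lemma sum_hits: "(\<Sum>key\<in>keys. hits h Y z key) = real (card Y) * (2 ^ k / 2 ^ m)"
proof -
  have "(\<Sum>key\<in>keys. hits h Y z key) = (\<Sum>y\<in>Y. \<Sum>key\<in>keys. if h key y = z then 1 else 0)"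
    unfolding hits_def by (rule sum.swap)
  also have "\<dots> = (\<Sum>y\<in>Y. 2 ^ k / 2 ^ m)"
    using sum_keys_hit[OF N lz] Y by (intro sum.cong) auto
  finally show ?thesis by simp
qed

lemma sum_hits_squared_le:
  "(\<Sum>key\<in>keys. (hits h Y z key)\<^sup>2) \<le> real (card Y) * (2 ^ k / 2 ^ m) + real (card Y) ^ 2 * (2 ^ k / 2 ^ (2 * m))"
proof (cases "finite Y")
  case True
  have "(\<Sum>key\<in>keys. (hits h Y z key)\<^sup>2)
      = (\<Sum>y\<in>Y. \<Sum>y'\<in>Y. \<Sum>key\<in>keys. (if h key y = z then 1 else 0) * (if h key y' = z then 1 else 0))"
    unfolding hits_def power2_eq_square sum_product by (subst sum.swap) (simp add: sum.swap[of _ keys])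
  also have "\<dots> \<le> (\<Sum>y\<in>Y. \<Sum>y'\<in>Y. (if y' = y then 2 ^ k / 2 ^ m else 0) + 2 ^ k / 2 ^ (2 * m))"
    using sum_keys_hit_pair[OF N lz] Y by (intro sum_mono) (auto simp: subset_iff)
  also have "\<dots> = real (card Y) * (2 ^ k / 2 ^ m) + real (card Y) ^ 2 * (2 ^ k / 2 ^ (2 * m))"
    using True by (simp add: sum.distrib power2_eq_square ring_distribs)
  finally show ?thesis .
qed (simp add: hits_def)

lemma sum_hits_variance_le:
  "(\<Sum>key\<in>keys. (hits h Y z key - real (card Y) / 2 ^ m)\<^sup>2) \<le> real (card Y) * (2 ^ k / 2 ^ m)"
proof -
  define mu where "mu = real (card Y) / 2 ^ m"
  have "(\<Sum>key\<in>keys. (hits h Y z key - mu)\<^sup>2)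
      = (\<Sum>key\<in>keys. (hits h Y z key)\<^sup>2) - 2 * mu * (\<Sum>key\<in>keys. hits h Y z key) + 2 ^ k * mu\<^sup>2"
    by (simp add: power2_diff sum.distrib sum_subtractf sum_distrib_left card_bool_lists algebra_simps)
  also have "\<dots> \<le> real (card Y) * (2 ^ k / 2 ^ m) + real (card Y) ^ 2 * (2 ^ k / 2 ^ (2 * m))
      - 2 * mu * (real (card Y) * (2 ^ k / 2 ^ m)) + 2 ^ k * mu\<^sup>2"
    using sum_hits_squared_le sum_hits by simp
  also have "\<dots> = real (card Y) * (2 ^ k / 2 ^ m)"
    unfolding mu_def mult_2 power_add by (simp add: power2_eq_square field_simps)
  finally show ?thesis unfolding mu_def .
qed

lemma card_keys_missing_value_le:
  assumes Y_ne: "card Y > 0"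
  shows "real (card {key. length key = k \<and> (\<forall>y\<in>Y. h key y \<noteq> z)}) \<le> 2 ^ k * 2 ^ m / real (card Y)"
proof -
  let ?mu = "real (card Y) / 2 ^ m" and ?missing = "{key. length key = k \<and> (\<forall>y\<in>Y. h key y \<noteq> z)}"
  have "real (card ?missing) * ?mu\<^sup>2 = (\<Sum>key\<in>?missing. (hits h Y z key - ?mu)\<^sup>2)"
    by (simp add: hits_def)
  also have "\<dots> \<le> (\<Sum>key\<in>keys. (hits h Y z key - ?mu)\<^sup>2)"
    by (rule sum_mono2[OF finite_bool_lists]) auto
  also have "\<dots> \<le> real (card Y) * (2 ^ k / 2 ^ m)"
    by (rule sum_hits_variance_le)
  finally show ?thesis
    using Y_ne by (simp add: power2_eq_square field_simps)
qed

end

lemma hash_onto_from_large_set: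
  assumes N: "0 < N" and Y: "Y \<subseteq> {y. length y = N}" and large: "real (card Y) > 2 ^ (2 * m)"
  shows "\<exists>key. length key = k \<and> (\<forall>z. length z = m \<longrightarrow> (\<exists>y\<in>Y. h key y = z))"
proof (rule ccontr)
  assume "\<not> ?thesis"
  then have "keys \<subseteq> (\<Union>z\<in>{z. length z = m}. {key. length key = k \<and> (\<forall>y\<in>Y. h key y \<noteq> z)})"
    by blast
  then have "real (card keys) \<le> real (card (\<Union>z\<in>{z. length z = m}. {key. length key = k \<and> (\<forall>y\<in>Y. h key y \<noteq> z)}))"
    by (intro of_nat_mono card_mono) (auto intro: finite_subset[OF _ finite_bool_lists])
  also have "\<dots> \<le> (\<Sum>z\<in>{z. length z = m}. real (card {key. length key = k \<and> (\<forall>y\<in>Y. h key y \<noteq> z)}))"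
    unfolding of_nat_sum[symmetric] by (intro of_nat_mono card_UN_le finite_bool_lists)
  also have "\<dots> \<le> (\<Sum>z\<in>{z :: bool list. length z = m}. 2 ^ k * 2 ^ m / real (card Y))"
    using large by (intro sum_mono card_keys_missing_value_le[OF N _ Y]) auto
  also have "\<dots> = 2 ^ k * (2 ^ (2 * m) / real (card Y))"
    by (simp add: card_bool_lists power_mult_distrib mult_2 power_add)
  also have "\<dots> < 2 ^ k"
    using large by (simp add: field_simps)
  finally show False by (simp add: card_bool_lists)
qed

text \<open>If more than \<open>2^(2m)\<close> inputs missed every admissible value, some key would map them onto
  all of \<open>{0,1}^m\<close>.\<close>

lemma card_hits_admissible_ge:
  assumes N: "0 < N" and admissible: "\<forall>key. length key = k \<longrightarrow> (\<exists>z. length z = m \<and> R key z)"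
  shows "real (card {y. length y = N \<and> (\<exists>key. length key = k \<and> R key (h key y))}) \<ge> 2 ^ N - 2 ^ (2 * m)"
proof -
  let ?A = "{y. length y = N \<and> (\<exists>key. length key = k \<and> R key (h key y))}"
  let ?Y = "{y. length y = N \<and> \<not> (\<exists>key. length key = k \<and> R key (h key y))}"
  have Y_small: "real (card ?Y) \<le> 2 ^ (2 * m)"
  proof (rule ccontr)
    assume "\<not> ?thesis"
    then obtain key where "length key = k" and onto: "\<forall>z. length z = m \<longrightarrow> (\<exists>y\<in>?Y. h key y = z)"
      using hash_onto_from_large_set[OF N, of ?Y] by auto
    then show False using admissible onto by blast
  qed
  have "card ?A + card ?Y = card {y :: bool list. length y = N}"
    by (subst card_Un_disjoint[symmetric])
      (auto intro: finite_subset[OF _ finite_bool_lists] arg_cong[where f = card])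
  then have "real (card ?A + card ?Y) = real (2 ^ N)" by (simp only: card_bool_lists)
  then have "real (card ?A) + real (card ?Y) = 2 ^ N" by simp
  with Y_small show ?thesis by linarith
qed

end

section \<open>Polynomial-size verifiers for plugged circuits\<close>

definition ntm_states :: "ntm \<Rightarrow> transition list \<Rightarrow> nat list" where
  "ntm_states M ds = q0 M # qacc M # map tr_dst ds"

definition ntm_symbols :: "transition list \<Rightarrow> nat list" where
  "ntm_symbols ds = 0 # 1 # 2 # map tr_write ds"

lemma length_ntm_states [simp]: "length (ntm_states M ds) = length ds + 2"
  by (simp add: ntm_states_def)

lemma length_ntm_symbols [simp]: "length (ntm_symbols ds) = length ds + 3"
  by (simp add: ntm_symbols_def)

definition enc_plug_length :: "circuit \<Rightarrow> circuit \<Rightarrow> nat \<Rightarrow> nat" where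
  "enc_plug_length Gc Hc k = length (enc_plug_prefix Gc Hc k) + 2 * k + length (enc_plug_suffix Gc Hc k)"

lemma length_enc_circuit_plug: "length (enc_circuit (plug Gc Hc key)) = enc_plug_length Gc Hc (length key)"
  by (simp add: enc_plug_length_def enc_circuit_plug)

text \<open>\<open>T\<close> is the number of steps granted to \<open>M\<close>.  Within \<open>T\<close> steps the head never passes
  cell \<open>T\<close>, so \<open>T + m + 1\<close> simulated cells suffice to run \<open>M\<close> and to read an output of
  length \<open>m\<close> together with the cell that ends it; the rest of the input is never seen.\<close>

definition plug_verifier :: "ntm \<Rightarrow> transition list \<Rightarrow> circuit \<Rightarrow> circuit \<Rightarrow> nat \<Rightarrow> nat \<Rightarrow> nat \<Rightarrow> circuit" where
  "plug_verifier M ds Gc Hc N k T =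
    (let L = enc_plug_length Gc Hc k; m = length (couts Hc)
     in verifier_sim.verifier M ds (ntm_states M ds) (ntm_symbols ds) (T + m + 1) N k Hc T L m
          (enc_plug_bit (enc_plug_prefix Gc Hc k) (enc_plug_suffix Gc Hc k) k N))"

lemma verifier_sim_plug:
  assumes "set ds = delta M" and "circ_wf Hc" and "cin Hc = k + N"
  shows "verifier_sim M ds (ntm_states M ds) (ntm_symbols ds)
    (T + length (couts Hc) + 1) N k Hc T (enc_plug_length Gc Hc k) (length (couts Hc))
    (enc_plug_bit (enc_plug_prefix Gc Hc k) (enc_plug_suffix Gc Hc k) k N) (\<lambda>key. enc_circuit (plug Gc Hc key))"
proof unfold_locales
  show "\<forall>xs. N + k \<le> length xs \<longrightarrow> (\<forall>i<enc_plug_length Gc Hc k.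
      feval xs (enc_plug_bit (enc_plug_prefix Gc Hc k) (enc_plug_suffix Gc Hc k) k N i)
      = enc_circuit (plug Gc Hc (take k (drop N xs))) ! i)"
    by (auto simp: feval_enc_plug_bit enc_circuit_plug)
qed (use assms in \<open>auto simp: ntm_states_def ntm_symbols_def length_enc_circuit_plug fm_wf_enc_plug_bit\<close>)

context
  fixes M :: ntm and ds :: "transition list" and Gc Hc :: circuit and N k T :: nat
  assumes ds: "set ds = delta M" and wf_H: "circ_wf Hc" and cin_H: "cin Hc = k + N"
begin

private lemmas sim = verifier_sim_plug[OF ds wf_H cin_H, where Gc = Gc and T = T]

lemma circ_wf_plug_verifier: "circ_wf (plug_verifier M ds Gc Hc N k T)"
  using verifier_sim.circ_wf_verifier[OF sim] by (simp add: plug_verifier_def Let_def)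

lemma cin_plug_verifier: "cin (plug_verifier M ds Gc Hc N k T) = N + (k + T * length ds)"
  using verifier_sim.cin_verifier[OF sim] by (simp add: plug_verifier_def Let_def)

lemma length_couts_plug_verifier: "length (couts (plug_verifier M ds Gc Hc N k T)) = 1"
  using verifier_sim.length_couts_verifier[OF sim] by (simp add: plug_verifier_def Let_def)

lemma nd_accepts_plug_verifier:
  assumes ly: "length y = N"
    and time: "\<forall>key t c. length key = k \<longrightarrow> (ntm_step M ^^ t) (ntm_init M (enc_circuit (plug Gc Hc key))) c \<longrightarrow> t \<le> T"
  shows "nd_accepts (plug_verifier M ds Gc Hc N k T) (k + T * length ds) y \<longleftrightarrow>
    (\<exists>key. length key = k \<and> ntm_accepts_with M (enc_circuit (plug Gc Hc key)) (ceval Hc (key @ y)))"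
  using verifier_sim.accepting_run_of_verifier[OF sim ly] verifier_sim.verifier_accepts_run[OF sim ly] time
  by (auto simp: plug_verifier_def Let_def)

lemma csize_plug_verifier_le:
  defines "P \<equiv> T + length (couts Hc) + 1"
  defines "B \<equiv> length ds + 2 + P + P * (length ds + 3)"
    and "K \<equiv> 2 * (P + length ds + (length ds + 2) + (length ds + 3)) + 3"
  shows "csize (plug_verifier M ds Gc Hc N k T)
    \<le> N + k + T * length ds + csize Hc + 3 * B + T * (B * (K ^ 10 + 1)) + K ^ 6 + 2"
proof -
  have "\<forall>i<enc_plug_length Gc Hc k. fsize (enc_plug_bit (enc_plug_prefix Gc Hc k) (enc_plug_suffix Gc Hc k) k N i) = 1"
    by (simp add: fsize_enc_plug_bit)
  from verifier_sim.csize_verifier[OF sim this]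
  have "csize (plug_verifier M ds Gc Hc N k T)
    \<le> N + k + T * length ds + length (cgates Hc) + 3 * B + T * (B * (K ^ 10 + 1)) + K ^ 6 + 2"
    unfolding plug_verifier_def Let_def length_ntm_states length_ntm_symbols P_def B_def K_def .
  moreover have "length (cgates Hc) \<le> csize Hc" by (simp add: csize_def)
  ultimately show ?thesis by linarith
qed

end

lemma length_enc_circuit_plug_le:
  assumes "circ_wf Gc" "circ_wf Hc" "cin Hc = k + length (couts Gc)"
  shows "enc_plug_length Gc Hc k \<le> 5 * Suc (csize Gc + k + csize Hc) * Suc (csize Gc + k + csize Hc)"
proof -
  define key where "key = replicate k False"
  have lk: "length key = k" by (simp add: key_def)
  have wf: "circ_wf (plug Gc Hc key)" using circ_wf_plug assms lk by simp
  have size: "csize (plug Gc Hc key) \<le> csize Gc + k + csize Hc"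
    using lk by (simp add: csize_def plug_eq)
  have "enc_plug_length Gc Hc k = length (enc_circuit (plug Gc Hc key))"
    using length_enc_circuit_plug lk by simp
  also have "\<dots> \<le> 5 * Suc (csize (plug Gc Hc key)) * Suc (csize (plug Gc Hc key))"
    by (rule length_enc_circuit_le[OF wf])
  also have "\<dots> \<le> 5 * Suc (csize Gc + k + csize Hc) * Suc (csize Gc + k + csize Hc)"
    using size by (intro mult_mono) auto
  finally show ?thesis .
qed

lemma poly_bounded_enc_plug_length:
  assumes G: "\<forall>n. circ_wf (Gc n) \<and> length (couts (Gc n)) = N n"
    and H: "\<forall>n. circ_wf (Hc n) \<and> cin (Hc n) = kl n + N n"
    and "poly_bounded (\<lambda>n. csize (Gc n))" "poly_bounded (\<lambda>n. csize (Hc n))" "poly_bounded kl"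
  shows "poly_bounded (\<lambda>n. enc_plug_length (Gc n) (Hc n) (kl n))"
proof (rule poly_bounded_mono)
  show "\<forall>n. enc_plug_length (Gc n) (Hc n) (kl n)
    \<le> 5 * Suc (csize (Gc n) + kl n + csize (Hc n)) * Suc (csize (Gc n) + kl n + csize (Hc n))"
    using G H by (intro allI length_enc_circuit_plug_le) auto
  show "poly_bounded (\<lambda>n. 5 * Suc (csize (Gc n) + kl n + csize (Hc n)) * Suc (csize (Gc n) + kl n + csize (Hc n)))"
    using assms(3-5) by (simp only: Suc_eq_plus1) (intro poly_bounded_mult poly_bounded_add poly_bounded_const)
qed

lemma poly_bounded_csize_plug_verifier:
  assumes ds: "set ds = delta M" and H: "\<forall>n. circ_wf (Hc n) \<and> cin (Hc n) = kl n + N n"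
    and "poly_bounded N" "poly_bounded kl" "poly_bounded T" "poly_bounded (\<lambda>n. csize (Hc n))"
  shows "poly_bounded (\<lambda>n. csize (plug_verifier M ds (Gc n) (Hc n) (N n) (kl n) (T n)))"
proof (rule poly_bounded_mono)
  let ?P = "\<lambda>n. T n + csize (Hc n) + 1"
  let ?B = "\<lambda>n. length ds + 2 + ?P n + ?P n * (length ds + 3)"
  let ?K = "\<lambda>n. 2 * (?P n + length ds + (length ds + 2) + (length ds + 3)) + 3"
  have "length (couts (Hc n)) \<le> csize (Hc n)" for n by (simp add: csize_def)
  then show "\<forall>n. csize (plug_verifier M ds (Gc n) (Hc n) (N n) (kl n) (T n))
    \<le> N n + kl n + T n * length ds + csize (Hc n) + 3 * ?B n + T n * (?B n * (?K n ^ 10 + 1)) + ?K n ^ 6 + 2"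
    using csize_plug_verifier_le[OF ds] H
    by (intro allI order.trans[OF csize_plug_verifier_le[OF ds]] add_mono mult_le_mono power_mono) auto
  show "poly_bounded (\<lambda>n. N n + kl n + T n * length ds + csize (Hc n) + 3 * ?B n
    + T n * (?B n * (?K n ^ 10 + 1)) + ?K n ^ 6 + 2)"
    using assms(3-6) by (intro poly_bounded_add poly_bounded_mult poly_bounded_power poly_bounded_const)
qed

lemma exists_verifier_family:
  fixes N kl :: "nat \<Rightarrow> nat" and Gc Hc :: "nat \<Rightarrow> circuit" and M :: ntm
  assumes G: "\<forall>n. circ_wf (Gc n) \<and> length (couts (Gc n)) = N n" and pb_G: "poly_bounded (\<lambda>n. csize (Gc n))"
    and H: "\<forall>n. circ_wf (Hc n) \<and> cin (Hc n) = kl n + N n" and pb_H: "poly_bounded (\<lambda>n. csize (Hc n))"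
    and pb_kl: "poly_bounded kl" and "ntm M" and "ntm_poly_time M"
  shows "\<exists>D W. (\<forall>n. circ_wf (D n) \<and> cin (D n) = N n + W n \<and> length (couts (D n)) = 1)
    \<and> poly_bounded (\<lambda>n. csize (D n))
    \<and> (\<forall>n y. length y = N n \<longrightarrow> (nd_accepts (D n) (W n) y \<longleftrightarrow>
         (\<exists>key. length key = kl n \<and> ntm_accepts_with M (enc_circuit (plug (Gc n) (Hc n) key)) (ceval (Hc n) (key @ y)))))"
proof -
  obtain c where time: "\<forall>x t cf. (ntm_step M ^^ t) (ntm_init M x) cf \<longrightarrow> t \<le> c * length x ^ c + c"
    using \<open>ntm_poly_time M\<close> by (auto simp: ntm_poly_time_def)
  obtain ds where ds: "set ds = delta M" using \<open>ntm M\<close> finite_list by (auto simp: ntm_def)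
  define L where "L n = enc_plug_length (Gc n) (Hc n) (kl n)" for n
  define T where "T n = c * L n ^ c + c" for n
  define D where "D n = plug_verifier M ds (Gc n) (Hc n) (N n) (kl n) (T n)" for n
  have shape: "\<forall>n. circ_wf (D n) \<and> cin (D n) = N n + (kl n + T n * length ds) \<and> length (couts (D n)) = 1"
    using H ds by (simp add: D_def circ_wf_plug_verifier cin_plug_verifier length_couts_plug_verifier)
  have poly: "poly_bounded (\<lambda>n. csize (D n))"
  proof -
    have pb_L: "poly_bounded L"
      unfolding L_def using G H pb_G pb_H pb_kl by (rule poly_bounded_enc_plug_length)
    then have pb_T: "poly_bounded T"
      unfolding T_def by (intro poly_bounded_add poly_bounded_mult poly_bounded_power poly_bounded_const)
    have pb_N: "poly_bounded N"
      by (rule poly_bounded_mono[OF _ pb_G]) (simp add: G csize_def)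
    show ?thesis
      unfolding D_def by (rule poly_bounded_csize_plug_verifier[OF ds H pb_N pb_kl pb_T pb_H])
  qed
  have time_T: "\<forall>key t cf. length key = kl n \<longrightarrow> (ntm_step M ^^ t) (ntm_init M (enc_circuit (plug (Gc n) (Hc n) key))) cf
      \<longrightarrow> t \<le> T n" for n
  proof (intro allI impI)
    fix key t cf assume "length key = kl n"
      and "(ntm_step M ^^ t) (ntm_init M (enc_circuit (plug (Gc n) (Hc n) key))) cf"
    then show "t \<le> T n" using time length_enc_circuit_plug[of "Gc n" "Hc n" key]
      unfolding T_def L_def by metis
  qed
  have "\<forall>n y. length y = N n \<longrightarrow> (nd_accepts (D n) (kl n + T n * length ds) y \<longleftrightarrow>
      (\<exists>key. length key = kl n \<and> ntm_accepts_with M (enc_circuit (plug (Gc n) (Hc n) key)) (ceval (Hc n) (key @ y))))"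
  proof (intro allI impI)
    fix n and y :: "bool list" assume "length y = N n"
    moreover have "circ_wf (Hc n)" "cin (Hc n) = kl n + N n" using H by auto
    ultimately show "nd_accepts (D n) (kl n + T n * length ds) y \<longleftrightarrow>
      (\<exists>key. length key = kl n \<and> ntm_accepts_with M (enc_circuit (plug (Gc n) (Hc n) key)) (ceval (Hc n) (key @ y)))"
      unfolding D_def using nd_accepts_plug_verifier[OF ds _ _ _ time_T] by blast
  qed
  with shape poly show ?thesis
    by (intro exI[of _ D] exI[of _ "\<lambda>n. kl n + T n * length ds"]) blast
qed

section \<open>Breaking the demi-bits generator\<close>

lemma verifier_rejects_generator_outputs:
  assumes acc: "\<forall>y. length y = N \<longrightarrow> (nd_accepts D W y \<longleftrightarrow>
      (\<exists>key. length key = k \<and> ntm_accepts_with M (enc_circuit (plug Gc Hc key)) (ceval Hc (key @ y))))"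
    and solves: "\<forall>key. length key = k \<longrightarrow> solves_avoid M (plug Gc Hc key)"
    and wf: "circ_wf Gc" "circ_wf Hc" and lengths: "length (couts Gc) = N" "cin Hc = k + N"
    and lx: "length x = cin Gc"
  shows "\<not> nd_accepts D W (ceval Gc x)"
proof
  assume "nd_accepts D W (ceval Gc x)"
  then obtain key where lk: "length key = k"
    and out: "ntm_accepts_with M (enc_circuit (plug Gc Hc key)) (ceval Hc (key @ ceval Gc x))"
    using acc lengths by (auto simp: ceval_def)
  have "ceval Hc (key @ ceval Gc x) = ceval (plug Gc Hc key) x"
    using ceval_plug[OF wf _ lx] lengths lk by simp
  then have "ceval Hc (key @ ceval Gc x) \<in> crange (plug Gc Hc key)"
    using lx by (auto simp: crange_def)
  with solves lk out show False by (auto simp: solves_avoid_def)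
qed

lemma verifier_accepts_many:
  assumes acc: "\<forall>y. length y = N \<longrightarrow> (nd_accepts D W y \<longleftrightarrow>
      (\<exists>key. length key = k \<and> ntm_accepts_with M (enc_circuit (plug Gc Hc key)) (ceval Hc (key @ y))))"
    and solves: "\<forall>key. length key = k \<longrightarrow> solves_avoid M (plug Gc Hc key)"
    and pairwise: "pairwise_indep k N m (\<lambda>key y. ceval Hc (key @ y))"
    and couts_H: "length (couts Hc) = m" and Nm: "2 * m < N"
  shows "real (card {y. length y = N \<and> nd_accepts D W y}) \<ge> 1/3 * 2 ^ N"
proof -
  have "\<forall>key. length key = k \<longrightarrow> (\<exists>z. length z = m \<and> ntm_accepts_with M (enc_circuit (plug Gc Hc key)) z)"
  proof (intro allI impI)
    fix key :: "bool list" assume "length key = k"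
    then have "solves_avoid M (plug Gc Hc key)" using solves by blast
    then obtain z where "ntm_accepts_with M (enc_circuit (plug Gc Hc key)) z"
      and "length z = length (couts (plug Gc Hc key))"
      unfolding solves_avoid_def by blast
    then show "\<exists>z. length z = m \<and> ntm_accepts_with M (enc_circuit (plug Gc Hc key)) z"
      using couts_H by auto
  qed
  from card_hits_admissible_ge[OF pairwise _ _ this] Nm couts_H
  have "real (card {y. length y = N \<and> (\<exists>key. length key = k \<and>
      ntm_accepts_with M (enc_circuit (plug Gc Hc key)) (ceval Hc (key @ y)))}) \<ge> 2 ^ N - 2 ^ (2 * m)"
    by (simp add: ceval_def)
  also have "{y. length y = N \<and> (\<exists>key. length key = k \<and>
      ntm_accepts_with M (enc_circuit (plug Gc Hc key)) (ceval Hc (key @ y)))} = {y. length y = N \<and> nd_accepts D W y}"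
    using acc by auto
  finally have "real (card {y. length y = N \<and> nd_accepts D W y}) \<ge> 2 ^ N - 2 ^ (2 * m)" .
  moreover have "(2::real) ^ (2 * m) * 2 \<le> 2 ^ N"
    using power_increasing[of "Suc (2 * m)" N "2::real"] Nm by simp
  ultimately show ?thesis by simp
qed

lemma solver_yields_distinguisher:
  assumes acc: "\<forall>y. length y = N \<longrightarrow> (nd_accepts D W y \<longleftrightarrow>
      (\<exists>key. length key = k \<and> ntm_accepts_with M (enc_circuit (plug Gc Hc key)) (ceval Hc (key @ y))))"
    and solves: "\<forall>key. length key = k \<longrightarrow> solves_avoid M (plug Gc Hc key)"
    and G: "computes Gc n N g" and H: "circ_wf Hc \<and> cin Hc = k + N \<and> length (couts Hc) = m"
    and pairwise: "pairwise_indep k N m (\<lambda>key y. ceval Hc (key @ y))" and Nm: "2 * m < N"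
  shows "real (card {y. length y = N \<and> nd_accepts D W y}) \<ge> 1/3 * 2 ^ N
    \<and> (\<forall>x. length x = n \<longrightarrow> \<not> nd_accepts D W (g x))"
proof
  show "real (card {y. length y = N \<and> nd_accepts D W y}) \<ge> 1/3 * 2 ^ N"
    using verifier_accepts_many[OF acc solves pairwise _ Nm] H by blast
  show "\<forall>x. length x = n \<longrightarrow> \<not> nd_accepts D W (g x)"
    using verifier_rejects_generator_outputs[OF acc solves] G H by (auto simp: computes_def)
qed

theorem theorem1p2:
  fixes N m kl :: "nat \<Rightarrow> nat"
    and G :: "nat \<Rightarrow> bool list \<Rightarrow> bool list"
    and Gc Hc :: "nat \<Rightarrow> circuit"
    and M :: ntm
  assumes "demi_bits N G"
    and "\<forall>n. computes (Gc n) n (N n) (G n)"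
    and "poly_bounded (\<lambda>n. csize (Gc n))"
    and "\<forall>n. circ_wf (Hc n) \<and> cin (Hc n) = kl n + N n \<and> length (couts (Hc n)) = m n"
    and "poly_bounded (\<lambda>n. csize (Hc n))"
    and "poly_bounded kl"
    and "\<forall>n. pairwise_indep (kl n) (N n) (m n) (\<lambda>key y. ceval (Hc n) (key @ y))"
    and "ntm M"
    and "ntm_poly_time M"
    and "\<forall>\<^sub>F n in sequentially. N n > 10 * m n \<and> m n > n"
  shows "\<forall>\<^sub>F n in sequentially.
           \<exists>key. length key = kl n \<and> \<not> solves_avoid M (plug (Gc n) (Hc n) key)"
proof -
  have "\<forall>n. circ_wf (Gc n) \<and> length (couts (Gc n)) = N n" "\<forall>n. circ_wf (Hc n) \<and> cin (Hc n) = kl n + N n"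
    using assms(2,4) by (simp_all add: computes_def)
  from exists_verifier_family[OF this(1) assms(3) this(2) assms(5,6,8,9)]
  obtain D W where D: "\<forall>n. circ_wf (D n) \<and> cin (D n) = N n + W n \<and> length (couts (D n)) = 1"
    and poly_D: "poly_bounded (\<lambda>n. csize (D n))"
    and acc: "\<forall>n y. length y = N n \<longrightarrow> (nd_accepts (D n) (W n) y \<longleftrightarrow>
      (\<exists>key. length key = kl n \<and> ntm_accepts_with M (enc_circuit (plug (Gc n) (Hc n) key)) (ceval (Hc n) (key @ y))))"
    by blast
  have "\<forall>\<^sub>F n in sequentially. \<not> (real (card {y. length y = N n \<and> nd_accepts (D n) (W n) y}) \<ge> 1/3 * 2 ^ N n
      \<and> (\<forall>x. length x = n \<longrightarrow> \<not> nd_accepts (D n) (W n) (G n x)))"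
    using assms(1) D poly_D unfolding demi_bits_def by blast
  with assms(10) show ?thesis
  proof eventually_elim
    case (elim n)
    with solver_yields_distinguisher[OF spec[OF acc, of n] _ assms(2,4,7)[rule_format, of n]]
    show ?case by fastforce
  qed
qed

end
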